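(* Let $\eta,\zeta\in\mathcal B_\infty$. (1) $\eta\preceq\zeta$ if and only if (i) for all $a\in\pm\mathbb N$ with $a>\eta(a)$ we have $\eta(a)\ge\zeta(a)$, and (ii) for all $a,b\in\pm\mathbb N$ with $a<b$, $a>\zeta(a)$, $b>\zeta(b)$ and $\zeta(a)<\zeta(b)$, we have $\eta(a)<\eta(b)$. (2) $$\mathcal L(\zeta)=\sum_{a\in\pm\mathbb N:\ a>\zeta(a),\ 0>\zeta(a)}|\zeta(a)|\;-\;\#\{(a,b):0<a<b,\ a=\zeta(a),\ a>\zeta(b)\}\;-\;\#\{(a,b):a<b,\ a>\zeta(a),\ b>\zeta(b),\ \zeta(a)>\zeta(b)\}\;-\sum_{a:\ 0>a>\zeta(a)}|a|.$$
   Context: Write $\bar i:=-i$. $\mathcal B_n$: permutations $w$ of $\pm[n]$ with $w(\bar a)=\overline{w(a)}$; $\mathcal B_\infty=\bigcup_n\mathcal B_n$, acting on $\pm\mathbb N$ and fixing all but finitely many points. $\ell(w)=\#\{(i,j):0<i<j,w(i)>w(j)\}+\sum_{i>0,w(i)<0}|w(i)|$. $0$-Bruhat order $\le_0$ generated by covers $u\lessdot_0 w$: $\ell(w)=\ell(u)+1$, $u^{-1}w\in\{(\bar j,j),(\bar j,i)(\bar i,j):0<i<j\}$. For each $\zeta$ there exists $u$ with $u\le_0\zeta u$ and $\mathcal L(\zeta):=\ell(\zeta u)-\ell(u)$ is independent of such $u$. The Lagrangian order: $\eta\preceq\zeta$ iff there exists $u\in\mathcal B_\infty$ with $u\le_0\eta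 u\le_0\zeta u$. *)

theory Defs
  imports Main
begin

text \<open>Elements of B_infinity: signed permutations of the nonzero integers (= +-N),
  modelled as bijections of int that are odd (w(-a) = -w(a), hence w 0 = 0)
  and fix all but finitely many points.\<close>
definition signed_perm :: "(int \<Rightarrow> int) \<Rightarrow> bool" where
  "signed_perm w \<longleftrightarrow> bij w \<and> (\<forall>a. w (- a) = - w a) \<and> finite {a. w a \<noteq> a}"

definition blen :: "(int \<Rightarrow> int) \<Rightarrow> int" where
  "blen w = int (card {(i, j). 0 < i \<and> i < j \<and> w i > w j})
            + (\<Sum>i\<in>{i. 0 < i \<and> w i < 0}. \<bar>w i\<bar>)"

definition refl1 :: "int \<Rightarrow> int \<Rightarrow> int" where
  "refl1 j = (\<lambda>x. if x = j then - j else if x = - j then j else x)"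

definition refl2 :: "int \<Rightarrow> int \<Rightarrow> int \<Rightarrow> int" where
  "refl2 i j = (\<lambda>x. if x = - j then i else if x = i then - j
                    else if x = - i then j else if x = j then - i else x)"

text \<open>Covering relation of the 0-Bruhat order; products are compositions
  (u w)(a) = u(w(a)).\<close>
definition cover0 :: "(int \<Rightarrow> int) \<Rightarrow> (int \<Rightarrow> int) \<Rightarrow> bool" where
  "cover0 u w \<longleftrightarrow> signed_perm u \<and> signed_perm w \<and> blen w = blen u + 1 \<and>
     ((\<exists>j>0. inv u \<circ> w = refl1 j) \<or> (\<exists>i j. 0 < i \<and> i < j \<and> inv u \<circ> w = refl2 i j))"

definition bruhat0 :: "(int \<Rightarrow> int) \<Rightarrow> (int \<Rightarrow> int) \<Rightarrow> bool" where
  "bruhat0 u w \<longleftrightarrow> signed_perm u \<and> signed_perm w \<and> cover0\<^sup>*\<^sup>* u w"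

definition Lag :: "(int \<Rightarrow> int) \<Rightarrow> int" where
  "Lag \<zeta> = (SOME d. \<exists>u. signed_perm u \<and> bruhat0 u (\<zeta> \<circ> u) \<and> d = blen (\<zeta> \<circ> u) - blen u)"

definition lag_le :: "(int \<Rightarrow> int) \<Rightarrow> (int \<Rightarrow> int) \<Rightarrow> bool" where
  "lag_le \<eta> \<zeta> \<longleftrightarrow> (\<exists>u. signed_perm u \<and> bruhat0 u (\<eta> \<circ> u) \<and> bruhat0 (\<eta> \<circ> u) (\<zeta> \<circ> u))"

end

theory Submission
  imports Defs
begin

text \<open>
  The 0-Bruhat order has a combinatorial description: \<open>u \<le>\<^sub>0 w\<close> iff \<open>w p \<le> u p\<close> for all
  \<open>p > 0\<close> and every ascent \<open>u a < u b\<close> with \<open>0 < a < b\<close> remains an ascent of \<open>w\<close>.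
  Necessity is checked on covers, by computing how the length changes under right multiplication
  with the two kinds of reflections; sufficiency follows by walking from \<open>u\<close> down to \<open>w\<close>
  through covers, each of which lowers the sum of the values \<open>u p\<close>, \<open>0 < p \<le> K\<close>.
  With this description \<open>\<eta> \<preceq> \<zeta>\<close> becomes a condition on a single \<open>u\<close>, and the best
  choice of \<open>u\<close> lists the points not raised by \<open>\<zeta>\<close> in increasing order of their
  \<open>\<zeta>\<close>-values; conditions (i) and (ii) say precisely that this \<open>u\<close> works.
  For the same \<open>u\<close> the length difference \<open>blen (\<zeta> \<circ> u) - blen u\<close> is computed from the negative
  entries and the inversions lost by \<open>\<zeta> u\<close>; the inversions lost at a fixed point \<open>f\<close> of
  \<open>\<zeta>\<close> are counted by the crossings of \<open>f\<close>, which go down as often as they go up.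
\<close>

section \<open>Signed permutations\<close>

definition fixed_beyond :: "int \<Rightarrow> (int \<Rightarrow> int) \<Rightarrow> bool" where
  "fixed_beyond K f \<longleftrightarrow> (\<forall>v. K < \<bar>v\<bar> \<longrightarrow> f v = v)"

lemma signed_perm_bij: "signed_perm w \<Longrightarrow> bij w"
  by (simp add: signed_perm_def)

lemma signed_perm_inj: "signed_perm w \<Longrightarrow> inj w"
  by (simp add: signed_perm_def bij_def)

lemma signed_perm_odd: "signed_perm w \<Longrightarrow> w (- a) = - w a"
  by (simp add: signed_perm_def)

lemma signed_perm_zero: "signed_perm w \<Longrightarrow> w 0 = 0"
  using signed_perm_odd[of w 0] by simp

lemma signed_perm_eq_iff: "signed_perm w \<Longrightarrow> w a = w b \<longleftrightarrow> a = b"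
  using signed_perm_inj by (auto dest: injD)

lemma signed_perm_eq_0_iff: "signed_perm w \<Longrightarrow> w a = 0 \<longleftrightarrow> a = 0"
  by (metis signed_perm_eq_iff signed_perm_zero)

lemma signed_perm_f_inv_f: "signed_perm w \<Longrightarrow> w (inv w a) = a"
  by (rule surj_f_inv_f[OF bij_is_surj[OF signed_perm_bij]])

lemma signed_perm_inv_f_f: "signed_perm w \<Longrightarrow> inv w (w a) = a"
  by (rule inv_f_f[OF signed_perm_inj])

lemma signed_perm_comp:
  assumes "signed_perm f" "signed_perm g"
  shows "signed_perm (f \<circ> g)"
proof -
  have "{a. (f \<circ> g) a \<noteq> a} \<subseteq> {a. g a \<noteq> a} \<union> {a. f a \<noteq> a}" by auto
  then have "finite {a. (f \<circ> g) a \<noteq> a}"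
    using assms by (auto simp: signed_perm_def intro: finite_subset)
  then show ?thesis
    using assms by (simp add: signed_perm_def bij_comp)
qed

lemma signed_perm_inv:
  assumes w: "signed_perm w"
  shows "signed_perm (inv w)"
proof -
  have "inv w (- a) = - inv w a" for a
  proof -
    have "w (- inv w a) = - a" by (simp add: signed_perm_odd[OF w] signed_perm_f_inv_f[OF w])
    then show ?thesis by (metis signed_perm_inv_f_f[OF w])
  qed
  moreover have "{a. inv w a \<noteq> a} = {a. w a \<noteq> a}"
    by (metis signed_perm_f_inv_f signed_perm_inv_f_f w)
  ultimately show ?thesis
    using w by (simp add: signed_perm_def bij_imp_bij_inv)
qed

lemma signed_perm_fixed_beyond:
  assumes "signed_perm w"
  shows "\<exists>K\<ge>k. fixed_beyond K w"
proof -
  let ?S = "{a. w a \<noteq> a}"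
  have "finite ?S" using assms by (simp add: signed_perm_def)
  then have "fixed_beyond (Max (insert k (abs ` ?S))) w"
    unfolding fixed_beyond_def using Max_ge[of "insert k (abs ` ?S)"] by force
  moreover have "k \<le> Max (insert k (abs ` ?S))"
    using \<open>finite ?S\<close> by simp
  ultimately show ?thesis by blast
qed

lemma fixed_beyond_mono: "fixed_beyond K f \<Longrightarrow> K \<le> K' \<Longrightarrow> fixed_beyond K' f"
  unfolding fixed_beyond_def by auto

lemma fixed_beyond_comp: "fixed_beyond K f \<Longrightarrow> fixed_beyond K g \<Longrightarrow> fixed_beyond K (f \<circ> g)"
  unfolding fixed_beyond_def by auto

lemma fixed_beyond_window:
  assumes "signed_perm w" "fixed_beyond K w" "\<bar>v\<bar> \<le> K"
  shows "\<bar>w v\<bar> \<le> K"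
  using assms signed_perm_eq_iff[OF assms(1), of "w v" v] unfolding fixed_beyond_def by force

lemma signed_perm_image_window:
  assumes w: "signed_perm w" and K: "fixed_beyond K w"
  shows "w ` {-K..K} = {-K..K}"
proof (intro set_eqI iffI)
  fix v assume "v \<in> w ` {-K..K}"
  then obtain x where "\<bar>x\<bar> \<le> K" "v = w x" by (metis abs_le_iff atLeastAtMost_iff imageE minus_le_iff)
  then show "v \<in> {-K..K}" using fixed_beyond_window[OF w K, of x] by auto
next
  fix v assume v: "v \<in> {-K..K}"
  have wv: "w (inv w v) = v" by (rule signed_perm_f_inv_f[OF w])
  have "\<bar>inv w v\<bar> \<le> K"
  proof (rule ccontr)
    assume "\<not> \<bar>inv w v\<bar> \<le> K"
    then have "w (inv w v) = inv w v" using K unfolding fixed_beyond_def by simp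
    with wv v \<open>\<not> \<bar>inv w v\<bar> \<le> K\<close> show False by auto
  qed
  then show "v \<in> w ` {-K..K}" using wv by (intro image_eqI[of _ _ "inv w v"]) auto
qed

lemma signed_perm_image_punctured_window:
  assumes w: "signed_perm w" and K: "fixed_beyond K w"
  shows "w ` ({-K..K} - {0}) = {-K..K} - {0}"
  using signed_perm_image_window[OF assms] signed_perm_zero[OF w]
  by (simp add: image_set_diff[OF signed_perm_inj[OF w]])

lemma card_window_comp:
  assumes w: "signed_perm w" and K: "fixed_beyond K w"
  shows "card {k \<in> {-K..K}. P (w k)} = card {v \<in> {-K..K}. P v}"
proof -
  have "w ` {k \<in> {-K..K}. P (w k)} = w ` {-K..K} \<inter> {v. P v}" by auto
  then have "w ` {k \<in> {-K..K}. P (w k)} = {v \<in> {-K..K}. P v}"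
    by (simp add: signed_perm_image_window[OF w K] Int_def)
  moreover have "inj_on w {k \<in> {-K..K}. P (w k)}"
    using signed_perm_inj[OF w] by (rule inj_on_subset) simp
  ultimately show ?thesis by (metis card_image)
qed

lemma sum_of_bool_window:
  assumes w: "signed_perm w" and K: "fixed_beyond K w"
  shows "(\<Sum>k\<in>{1..K}. of_bool (Q (w k)) + of_bool (Q (- w k))) = (\<Sum>v\<in>{-K..K} - {0}. of_bool (Q v) :: int)"
proof -
  have neg: "(\<Sum>k\<in>{1..K}. of_bool (Q (- w k)) :: int) = (\<Sum>k\<in>{-K..-1}. of_bool (Q (w k)))"
  proof -
    have "(\<Sum>k\<in>uminus ` {1..K}. of_bool (Q (w k)) :: int) = (\<Sum>k\<in>{1..K}. of_bool (Q (w (- k))))"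
      by (simp add: sum.reindex del: sum_of_bool_eq image_uminus_atLeastAtMost)
    then show ?thesis by (simp add: signed_perm_odd[OF w] del: sum_of_bool_eq)
  qed
  have "{-K..K} - {0} = {1..K} \<union> {-K..-1}" by auto
  then have "(\<Sum>k\<in>{-K..K} - {0}. of_bool (Q (w k)) :: int)
      = (\<Sum>k\<in>{1..K}. of_bool (Q (w k))) + (\<Sum>k\<in>{-K..-1}. of_bool (Q (w k)))"
    by (simp add: sum.union_disjoint del: sum_of_bool_eq)
  moreover have "(\<Sum>k\<in>{-K..K} - {0}. of_bool (Q (w k)) :: int) = (\<Sum>v\<in>{-K..K} - {0}. of_bool (Q v))"
    using sum.reindex[OF inj_on_subset[OF signed_perm_inj[OF w]], of "{-K..K} - {0}" "\<lambda>v. of_bool (Q v) :: int"]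
    by (simp add: signed_perm_image_punctured_window[OF w K] del: sum_of_bool_eq)
  ultimately show ?thesis
    using neg by (simp add: sum.distrib del: sum_of_bool_eq)
qed

lemma refl1_refl1: "refl1 j \<circ> refl1 j = id"
  by (auto simp: refl1_def fun_eq_iff)

lemma refl2_refl2: "0 < i \<Longrightarrow> i < j \<Longrightarrow> refl2 i j \<circ> refl2 i j = id"
  by (auto simp: refl2_def fun_eq_iff)

lemma signed_perm_refl1: "signed_perm (refl1 j)"
proof -
  have "finite {a. refl1 j a \<noteq> a}"
    by (rule finite_subset[of _ "{j, -j}"]) (auto simp: refl1_def)
  then show ?thesis
    using o_bij[OF refl1_refl1 refl1_refl1] by (auto simp: signed_perm_def refl1_def)
qed

lemma signed_perm_refl2:
  assumes "0 < i" "i < j"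
  shows "signed_perm (refl2 i j)"
proof -
  have "finite {a. refl2 i j a \<noteq> a}"
    by (rule finite_subset[of _ "{i, -i, j, -j}"]) (auto simp: refl2_def)
  then show ?thesis
    using assms o_bij[OF refl2_refl2 refl2_refl2, OF assms assms]
    by (auto simp: signed_perm_def refl2_def)
qed

lemma comp_refl1_refl1: "f \<circ> refl1 j \<circ> refl1 j = f"
  by (simp add: comp_assoc refl1_refl1)

lemma comp_refl2_refl2: "0 < i \<Longrightarrow> i < j \<Longrightarrow> f \<circ> refl2 i j \<circ> refl2 i j = f"
  by (simp add: comp_assoc refl2_refl2)

lemma fixed_beyond_refl1: "0 < j \<Longrightarrow> j \<le> K \<Longrightarrow> fixed_beyond K (refl1 j)"
  unfolding fixed_beyond_def refl1_def by auto

lemma fixed_beyond_refl2: "0 < i \<Longrightarrow> i < j \<Longrightarrow> j \<le> K \<Longrightarrow> fixed_beyond K (refl2 i j)"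
  unfolding fixed_beyond_def refl2_def by auto

lemma comp_refl1_apply:
  assumes "signed_perm u" "0 < j"
  shows "(u \<circ> refl1 j) j = - u j" and "0 < k \<Longrightarrow> k \<noteq> j \<Longrightarrow> (u \<circ> refl1 j) k = u k"
  using assms by (auto simp: refl1_def signed_perm_odd)

lemma comp_refl2_apply:
  assumes "signed_perm u" "0 < p" "p < q"
  shows "(u \<circ> refl2 p q) p = - u q" and "(u \<circ> refl2 p q) q = - u p"
    and "0 < k \<Longrightarrow> k \<noteq> p \<Longrightarrow> k \<noteq> q \<Longrightarrow> (u \<circ> refl2 p q) k = u k"
  using assms by (auto simp: refl2_def signed_perm_odd)

section \<open>Length changes under the reflections\<close>

definition inv_count :: "int \<Rightarrow> (int \<Rightarrow> int) \<Rightarrow> int" where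
  "inv_count K f = (\<Sum>i\<in>{1..K}. \<Sum>k\<in>{1..K}. of_bool (i < k \<and> f k < f i))"

definition neg_sum :: "int \<Rightarrow> (int \<Rightarrow> int) \<Rightarrow> int" where
  "neg_sum K f = (\<Sum>i\<in>{1..K}. if f i < 0 then - f i else 0)"

lemma blen_window:
  assumes w: "signed_perm w" and K: "fixed_beyond K w"
  shows "blen w = inv_count K w + neg_sum K w"
proof -
  have moved: "i \<le> K" if "0 < i" "w i \<noteq> i" for i
    using K that unfolding fixed_beyond_def by force
  have "{(i, j). 0 < i \<and> i < j \<and> w i > w j} = ({1..K} \<times> {1..K}) \<inter> {(i, j). i < j \<and> w j < w i}"
  proof (intro set_eqI iffI)
    fix x assume "x \<in> {(i, j). 0 < i \<and> i < j \<and> w i > w j}"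
    then obtain i j where x: "x = (i, j)" "0 < i" "i < j" "w i > w j" by auto
    have "j \<le> K"
    proof (rule ccontr)
      assume "\<not> j \<le> K"
      then have "w j = j" using K unfolding fixed_beyond_def by auto
      moreover have "w i \<le> max i K"
        using fixed_beyond_window[OF w K, of i] moved[of i] x by (cases "w i = i") auto
      ultimately show False using x \<open>\<not> j \<le> K\<close> by simp
    qed
    then show "x \<in> ({1..K} \<times> {1..K}) \<inter> {(i, j). i < j \<and> w j < w i}" using x by auto
  qed auto
  then have "int (card {(i, j). 0 < i \<and> i < j \<and> w i > w j}) = inv_count K w"
    unfolding inv_count_def sum.cartesian_product
    by (simp add: sum.inter_filter[symmetric] Int_def case_prod_beta)
  moreover have "{i. 0 < i \<and> w i < 0} = {i \<in> {1..K}. w i < 0}"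
    using moved by force
  then have "(\<Sum>i\<in>{i. 0 < i \<and> w i < 0}. \<bar>w i\<bar>) = neg_sum K w"
    unfolding neg_sum_def by (simp add: sum.inter_filter[symmetric])
  ultimately show ?thesis unfolding blen_def by simp
qed

lemma sum_diff_supported:
  fixes f g :: "'a \<Rightarrow> 'b::ab_group_add"
  assumes "finite A" "J \<subseteq> A" "\<And>i. i \<in> A - J \<Longrightarrow> f i = g i"
  shows "sum f A - sum g A = (\<Sum>i\<in>J. f i - g i)"
proof -
  have "sum f A - sum g A = (\<Sum>i\<in>A. f i - g i)" by (simp add: sum_subtractf)
  also have "\<dots> = (\<Sum>i\<in>J. f i - g i)" using assms by (intro sum.mono_neutral_right) auto
  finally show ?thesis .
qed

lemma double_sum_supported:
  fixes d :: "'a \<Rightarrow> 'a \<Rightarrow> 'b::comm_monoid_add"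
  assumes "finite A" "J \<subseteq> A" "\<And>i k. i \<in> A - J \<Longrightarrow> k \<in> A - J \<Longrightarrow> d i k = 0"
  shows "(\<Sum>i\<in>A. \<Sum>k\<in>A. d i k) = (\<Sum>i\<in>J. \<Sum>k\<in>A. d i k) + (\<Sum>i\<in>A - J. \<Sum>k\<in>J. d i k)"
proof -
  have "(\<Sum>i\<in>A. \<Sum>k\<in>A. d i k) = (\<Sum>i\<in>J. \<Sum>k\<in>A. d i k) + (\<Sum>i\<in>A - J. \<Sum>k\<in>A. d i k)"
    using sum.subset_diff[OF assms(2,1)] by (simp add: add.commute)
  also have "(\<Sum>i\<in>A - J. \<Sum>k\<in>A. d i k) = (\<Sum>i\<in>A - J. \<Sum>k\<in>J. d i k)"
    using assms by (intro sum.cong refl sum.mono_neutral_right) auto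
  finally show ?thesis .
qed

lemma sum_of_bool_abs_less:
  assumes "1 \<le> m" "m \<le> K"
  shows "(\<Sum>v\<in>{-K..K} - {0}. of_bool (\<bar>v\<bar> < m) :: int) = 2 * (m - 1)"
proof -
  have "({-K..K} - {0}) \<inter> {v. \<bar>v\<bar> < m} = {-(m-1)..m-1} - {0}" using assms by auto
  moreover have "card ({-(m-1)..m-1} - {0::int}) = nat (2 * m - 2)"
    using assms by (simp add: card_Diff_singleton)
  ultimately show ?thesis using assms by simp
qed

lemma card_abs_less_window:
  assumes u: "signed_perm u" and K: "fixed_beyond K u" and m: "1 \<le> m" "m \<le> K"
  shows "int (card {k \<in> {1..K}. \<bar>u k\<bar> < m}) = m - 1"
proof -
  have "2 * (\<Sum>k\<in>{1..K}. of_bool (\<bar>u k\<bar> < m)) = (\<Sum>k\<in>{1..K}. of_bool (\<bar>u k\<bar> < m) + of_bool (\<bar>- u k\<bar> < m) :: int)"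
    by (simp add: sum_distrib_left del: sum_of_bool_eq)
  also have "\<dots> = (\<Sum>v\<in>{-K..K} - {0}. of_bool (\<bar>v\<bar> < m))"
    by (rule sum_of_bool_window[OF u K])
  also have "\<dots> = 2 * (m - 1)" by (rule sum_of_bool_abs_less[OF m])
  finally show ?thesis by (simp add: Int_def)
qed

lemma neg_sum_comp_refl1:
  assumes u: "signed_perm u" and j: "0 < j" "j \<le> K" and pos: "0 < u j"
  shows "neg_sum K (u \<circ> refl1 j) = neg_sum K u + u j"
proof -
  let ?ng = "\<lambda>f i. if f i < 0 then - f i else (0::int)"
  have "neg_sum K (u \<circ> refl1 j) - neg_sum K u = (\<Sum>i\<in>{j}. ?ng (u \<circ> refl1 j) i - ?ng u i)"
    unfolding neg_sum_def using j comp_refl1_apply(2)[OF u j(1)] by (intro sum_diff_supported) auto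
  then show ?thesis using comp_refl1_apply(1)[OF u j(1)] pos by simp
qed

lemma inv_count_comp_refl1:
  assumes u: "signed_perm u" and j: "0 < j" "j \<le> K" and pos: "0 < u j"
  shows "inv_count K (u \<circ> refl1 j) - inv_count K u
    = int (card {k \<in> {1..K}. k < j \<and> \<bar>u k\<bar> < u j}) - int (card {k \<in> {1..K}. j < k \<and> \<bar>u k\<bar> < u j})"
proof -
  define w where "w = u \<circ> refl1 j"
  define A where "A = {1..K}"
  have jA: "j \<in> A" using j by (simp add: A_def)
  have wj: "w j = - u j" and wk: "\<And>k. k \<in> A \<Longrightarrow> k \<noteq> j \<Longrightarrow> w k = u k"
    using comp_refl1_apply[OF u j(1)] by (auto simp: w_def A_def)
  have um: "\<bar>u k\<bar> \<noteq> u j" if "k \<in> A" "k \<noteq> j" for k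
    using that j signed_perm_eq_iff[OF u, of k j] signed_perm_eq_iff[OF u, of k "-j"]
    by (auto simp: A_def signed_perm_odd[OF u] abs_if)
  define d where "d i k = of_bool (i < k \<and> w k < w i) - (of_bool (i < k \<and> u k < u i) :: int)" for i k
  have "inv_count K w - inv_count K u = (\<Sum>i\<in>A. \<Sum>k\<in>A. d i k)"
    unfolding inv_count_def d_def A_def by (simp add: sum_subtractf del: sum_of_bool_eq)
  also have "\<dots> = (\<Sum>i\<in>{j}. \<Sum>k\<in>A. d i k) + (\<Sum>i\<in>A - {j}. \<Sum>k\<in>{j}. d i k)"
    using jA by (intro double_sum_supported) (auto simp: A_def d_def wk)
  also have "(\<Sum>i\<in>{j}. \<Sum>k\<in>A. d i k) = - (\<Sum>k\<in>A. of_bool (j < k \<and> \<bar>u k\<bar> < u j))"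
  proof -
    have "d j k = - of_bool (j < k \<and> \<bar>u k\<bar> < u j)" if "k \<in> A" for k
      using um[OF that] wk[OF that] wj pos by (cases "k = j") (auto simp: d_def)
    then show ?thesis by (simp add: sum_negf[symmetric] del: sum_of_bool_eq)
  qed
  also have "(\<Sum>i\<in>A - {j}. \<Sum>k\<in>{j}. d i k) = (\<Sum>k\<in>A. of_bool (k < j \<and> \<bar>u k\<bar> < u j))"
  proof -
    have "d k j = of_bool (k < j \<and> \<bar>u k\<bar> < u j)" if "k \<in> A - {j}" for k
      using um[of k] wk[of k] that wj pos by (auto simp: d_def)
    then show ?thesis using jA by (intro sum.mono_neutral_cong_left) (auto simp: A_def)
  qed
  finally have "inv_count K w - inv_count K u
    = int (card {k \<in> A. k < j \<and> \<bar>u k\<bar> < u j}) - int (card {k \<in> A. j < k \<and> \<bar>u k\<bar> < u j})"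
    by (simp add: A_def Int_def)
  then show ?thesis unfolding w_def A_def .
qed

lemma blen_comp_refl1:
  assumes u: "signed_perm u" and K: "fixed_beyond K u" and j: "0 < j" "j \<le> K" and pos: "0 < u j"
  shows "blen (u \<circ> refl1 j) = blen u + 2 * int (card {k. 0 < k \<and> k < j \<and> \<bar>u k\<bar> < u j}) + 1"
proof -
  let ?S = "\<lambda>P. {k \<in> {1..K}. P k \<and> \<bar>u k\<bar> < u j}"
  have "?S (\<lambda>_. True) = ?S (\<lambda>k. k < j) \<union> ?S (\<lambda>k. j < k)"
    by (auto simp: linorder_not_less order_le_less)
  then have "card (?S (\<lambda>_. True)) = card (?S (\<lambda>k. k < j) \<union> ?S (\<lambda>k. j < k))"
    by (rule arg_cong)
  also have "\<dots> = card (?S (\<lambda>k. k < j)) + card (?S (\<lambda>k. j < k))"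
    by (rule card_Un_disjoint) (auto intro: finite_subset[of _ "{1..K}"])
  moreover have "int (card (?S (\<lambda>_. True))) = u j - 1"
    using card_abs_less_window[OF u K, of "u j"] fixed_beyond_window[OF u K, of j] j pos by simp
  moreover have "?S (\<lambda>k. k < j) = {k. 0 < k \<and> k < j \<and> \<bar>u k\<bar> < u j}" using j by auto
  moreover have "blen (u \<circ> refl1 j) = inv_count K (u \<circ> refl1 j) + neg_sum K (u \<circ> refl1 j)"
    by (rule blen_window[OF signed_perm_comp[OF u signed_perm_refl1] fixed_beyond_comp[OF K fixed_beyond_refl1[OF j]]])
  ultimately show ?thesis
    using blen_window[OF u K] inv_count_comp_refl1[OF u j pos] neg_sum_comp_refl1[OF u j pos] by simp
qed

lemma neg_sum_comp_refl2:
  assumes u: "signed_perm u" and pq: "0 < p" "p < q" "q \<le> K" and pos: "0 < u p + u q"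
  shows "neg_sum K (u \<circ> refl2 p q) = neg_sum K u + (u p + u q)"
proof -
  let ?ng = "\<lambda>f i. if f i < 0 then - f i else (0::int)"
  have "neg_sum K (u \<circ> refl2 p q) - neg_sum K u = (\<Sum>i\<in>{p, q}. ?ng (u \<circ> refl2 p q) i - ?ng u i)"
    unfolding neg_sum_def using pq comp_refl2_apply(3)[OF u pq(1,2)] by (intro sum_diff_supported) auto
  then show ?thesis using comp_refl2_apply(1,2)[OF u pq(1,2)] pq pos by (auto split: if_splits)
qed

lemma inv_count_comp_refl2:
  assumes u: "signed_perm u" and pq: "0 < p" "p < q" "q \<le> K" and pos: "0 < u p + u q"
  shows "inv_count K (u \<circ> refl2 p q) - inv_count K u =
     - (\<Sum>k\<in>{1..K} - {p, q}. of_bool (- u q < u k \<and> u k < u p) + of_bool (- u p < u k \<and> u k < u q))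
     + 2 * (\<Sum>k\<in>{1..K}. of_bool (k < p \<and> - u q < u k \<and> u k < u p) + of_bool (k < p \<and> - u p < u k \<and> u k < u q))
     + 2 * (\<Sum>k\<in>{1..K}. of_bool (p < k \<and> k < q \<and> - u p < u k \<and> u k < u q))"
proof -
  define w where "w = u \<circ> refl2 p q"
  define A where "A = {1..K}"
  define \<alpha> where "\<alpha> = u p"
  define \<beta> where "\<beta> = u q"
  have fA: "finite A" and PQ: "{p, q} \<subseteq> A" using pq by (auto simp: A_def)
  have wp: "w p = - \<beta>" and wq: "w q = - \<alpha>" and wk: "\<And>k. k \<in> A - {p, q} \<Longrightarrow> w k = u k"
    using comp_refl2_apply[OF u pq(1,2)] by (auto simp: w_def \<alpha>_def \<beta>_def A_def)
  have uk: "u k \<noteq> \<alpha> \<and> u k \<noteq> - \<alpha> \<and> u k \<noteq> \<beta> \<and> u k \<noteq> - \<beta>" if "k \<in> A - {p, q}" for k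
  proof -
    have "u k \<noteq> u p" "u k \<noteq> u q" "u k \<noteq> u (- p)" "u k \<noteq> u (- q)"
      using that signed_perm_eq_iff[OF u] pq by (auto simp: A_def)
    then show ?thesis using signed_perm_odd[OF u] \<alpha>_def \<beta>_def by simp
  qed
  define d where "d i k = of_bool (i < k \<and> w k < w i) - (of_bool (i < k \<and> u k < u i) :: int)" for i k
  define left where "left k = of_bool (k < p \<and> - \<beta> < u k \<and> u k < \<alpha>) + (of_bool (k < p \<and> - \<alpha> < u k \<and> u k < \<beta>) :: int)" for k
  define middle where "middle k = (of_bool (p < k \<and> k < q \<and> - \<alpha> < u k \<and> u k < \<beta>) :: int)" for k
  define inside where "inside k = of_bool (- \<beta> < u k \<and> u k < \<alpha>) + (of_bool (- \<alpha> < u k \<and> u k < \<beta>) :: int)" for k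
  have "inv_count K w - inv_count K u = (\<Sum>i\<in>A. \<Sum>k\<in>A. d i k)"
    unfolding inv_count_def d_def A_def by (simp add: sum_subtractf del: sum_of_bool_eq)
  also have "\<dots> = (\<Sum>i\<in>{p, q}. \<Sum>k\<in>A. d i k) + (\<Sum>i\<in>A - {p, q}. \<Sum>k\<in>{p, q}. d i k)"
    using wk by (intro double_sum_supported[OF fA PQ]) (auto simp: d_def)
  also have "\<dots> = (\<Sum>k\<in>A. d p k + d q k) + (\<Sum>i\<in>A - {p, q}. d i p + d i q)"
    using pq by (simp add: sum.distrib)
  also have "(\<Sum>k\<in>A. d p k + d q k) = (\<Sum>k\<in>A - {p, q}. d p k + d q k)"
    using wp wq pq by (intro sum.mono_neutral_right[OF fA]) (auto simp: d_def \<alpha>_def \<beta>_def)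
  also have "(\<Sum>k\<in>A - {p, q}. d p k + d q k) + (\<Sum>i\<in>A - {p, q}. d i p + d i q)
      = (\<Sum>k\<in>A - {p, q}. - inside k + 2 * left k + 2 * middle k)"
  proof -
    have "d p k + d q k + (d k p + d k q) = - inside k + 2 * left k + 2 * middle k" if "k \<in> A - {p, q}" for k
      using uk[OF that] wk[OF that] that wp wq pos pq
      unfolding d_def inside_def left_def middle_def \<alpha>_def \<beta>_def by (auto simp: of_bool_def)
    then show ?thesis by (simp add: sum.distrib[symmetric] del: sum_of_bool_eq)
  qed
  also have "\<dots> = - (\<Sum>k\<in>A - {p, q}. inside k) + 2 * (\<Sum>k\<in>A. left k) + 2 * (\<Sum>k\<in>A. middle k)"
  proof -
    have "(\<Sum>k\<in>A. left k) = (\<Sum>k\<in>A - {p, q}. left k)" "(\<Sum>k\<in>A. middle k) = (\<Sum>k\<in>A - {p, q}. middle k)"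
      using pq by (auto intro!: sum.mono_neutral_right[OF fA] simp: left_def middle_def)
    then show ?thesis by (simp add: sum.distrib sum_distrib_left sum_subtractf del: sum_of_bool_eq)
  qed
  finally show ?thesis unfolding w_def A_def inside_def left_def middle_def \<alpha>_def \<beta>_def .
qed

lemma blen_comp_refl2:
  assumes u: "signed_perm u" and K: "fixed_beyond K u" and pq: "0 < p" "p < q" "q \<le> K"
    and pos: "0 < u p + u q"
  shows "blen (u \<circ> refl2 p q) = blen u + (u p + u q)
     - (\<Sum>k\<in>{1..K} - {p, q}. of_bool (- u q < u k \<and> u k < u p) + of_bool (- u p < u k \<and> u k < u q))
     + 2 * (\<Sum>k\<in>{1..K}. of_bool (k < p \<and> - u q < u k \<and> u k < u p) + of_bool (k < p \<and> - u p < u k \<and> u k < u q))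
     + 2 * (\<Sum>k\<in>{1..K}. of_bool (p < k \<and> k < q \<and> - u p < u k \<and> u k < u q))"
proof -
  have "blen (u \<circ> refl2 p q) = inv_count K (u \<circ> refl2 p q) + neg_sum K (u \<circ> refl2 p q)"
    by (rule blen_window[OF signed_perm_comp[OF u signed_perm_refl2[OF pq(1,2)]]
          fixed_beyond_comp[OF K fixed_beyond_refl2[OF pq]]])
  then show ?thesis
    using blen_window[OF u K] inv_count_comp_refl2[OF u pq pos] neg_sum_comp_refl2[OF u pq pos] by simp
qed

lemma sum_refl2_window:
  assumes u: "signed_perm u" and K: "fixed_beyond K u" and pq: "0 < p" "p < q" "q \<le> K"
  shows "(\<Sum>k\<in>{1..K} - {p, q}. of_bool (- u q < u k \<and> u k < u p) + of_bool (- u p < u k \<and> u k < u q) :: int)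
     = int (card (({-K..K} - {0}) \<inter> {v. - u q < v \<and> v < u p}))
       - of_bool (- u p < u p \<and> u p < u q) - of_bool (- u q < u q \<and> u q < u p)"
proof -
  let ?f = "\<lambda>k. of_bool (- u q < u k \<and> u k < u p) + (of_bool (- u p < u k \<and> u k < u q) :: int)"
  have "(\<Sum>k\<in>{1..K}. ?f k) = (\<Sum>k\<in>{1..K}. of_bool (- u q < u k \<and> u k < u p) + of_bool (- u q < - u k \<and> - u k < u p))"
    by (intro sum.cong) auto
  also have "\<dots> = (\<Sum>v\<in>{-K..K} - {0}. of_bool (- u q < v \<and> v < u p))"
    by (rule sum_of_bool_window[OF u K])
  also have "\<dots> = int (card (({-K..K} - {0}) \<inter> {v. - u q < v \<and> v < u p}))"
    by simp
  finally show ?thesis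
    using sum.remove[of "{1..K}" p ?f] sum.remove[of "{1..K} - {p}" q ?f] pq
    by (simp add: Diff_insert2[symmetric] insert_commute)
qed

lemma blen_comp_refl2_mixed:
  assumes u: "signed_perm u" and K: "fixed_beyond K u" and pq: "0 < p" "p < q" "q \<le> K"
    and pos: "0 < u p + u q" and mixed: "u p < 0 \<or> u q < 0"
  shows "blen (u \<circ> refl2 p q) = blen u + 1
     + 2 * (\<Sum>k\<in>{1..K}. of_bool (k < p \<and> - u q < u k \<and> u k < u p) + of_bool (k < p \<and> - u p < u k \<and> u k < u q))
     + 2 * (\<Sum>k\<in>{1..K}. of_bool (p < k \<and> k < q \<and> - u p < u k \<and> u k < u q))"
proof -
  have "\<bar>u p\<bar> \<le> K" "\<bar>u q\<bar> \<le> K" using fixed_beyond_window[OF u K] pq by auto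
  then have "({-K..K} - {0}) \<inter> {v. - u q < v \<and> v < u p} = {- u q<..<u p}" using mixed pos by auto
  then show ?thesis
    using blen_comp_refl2[OF assms(1-6)] sum_refl2_window[OF assms(1-5)] mixed pos
    by (cases "u p < 0") (simp_all del: sum_of_bool_eq)
qed

lemma blen_comp_refl2_pos:
  assumes u: "signed_perm u" and K: "fixed_beyond K u" and pq: "0 < p" "p < q" "q \<le> K"
    and pos: "0 < u p" "0 < u q"
  shows "blen u + 3 \<le> blen (u \<circ> refl2 p q)"
proof -
  have "\<bar>u p\<bar> \<le> K" "\<bar>u q\<bar> \<le> K" using fixed_beyond_window[OF u K] pq by auto
  then have "({-K..K} - {0}) \<inter> {v. - u q < v \<and> v < u p} = {- u q<..<u p} - {0}" using pos by auto
  then have "int (card (({-K..K} - {0}) \<inter> {v. - u q < v \<and> v < u p})) = u p + u q - 2"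
    using pos by (simp add: card_Diff_singleton)
  moreover have "u p \<noteq> u q" using signed_perm_eq_iff[OF u] pq by simp
  moreover have "0 \<le> (\<Sum>k\<in>{1..K}. of_bool (k < p \<and> - u q < u k \<and> u k < u p) + of_bool (k < p \<and> - u p < u k \<and> u k < u q) :: int)"
    "0 \<le> (\<Sum>k\<in>{1..K}. of_bool (p < k \<and> k < q \<and> - u p < u k \<and> u k < u q) :: int)"
    by (auto intro!: sum_nonneg)
  ultimately show ?thesis
    using blen_comp_refl2[OF assms(1-5)] sum_refl2_window[OF assms(1-5)] pos
    by (cases "u p < u q") (simp_all del: sum_of_bool_eq)
qed

section \<open>A combinatorial description of the 0-Bruhat order\<close>

definition cover1_cond :: "(int \<Rightarrow> int) \<Rightarrow> int \<Rightarrow> bool" where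
  "cover1_cond u j \<longleftrightarrow> 0 < u j \<and> (\<forall>k. 0 < k \<and> k < j \<longrightarrow> u j \<le> \<bar>u k\<bar>)"

definition cover2_cond :: "(int \<Rightarrow> int) \<Rightarrow> int \<Rightarrow> int \<Rightarrow> bool" where
  "cover2_cond u p q \<longleftrightarrow> 0 < u p + u q \<and> (u p < 0 \<or> u q < 0) \<and>
     (\<forall>k. 0 < k \<and> k < p \<longrightarrow> \<not> (- u q < u k \<and> u k < u p) \<and> \<not> (- u p < u k \<and> u k < u q)) \<and>
     (\<forall>k. p < k \<and> k < q \<longrightarrow> \<not> (- u p < u k \<and> u k < u q))"

lemma blen_comp_refl1_eq_Suc_iff:
  assumes u: "signed_perm u" and j: "0 < j"
  shows "blen (u \<circ> refl1 j) = blen u + 1 \<longleftrightarrow> cover1_cond u j"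
proof -
  obtain K where K: "j \<le> K" "fixed_beyond K u" using signed_perm_fixed_beyond[OF u] by blast
  have "u j \<noteq> 0" using signed_perm_eq_0_iff[OF u] j by simp
  then consider "0 < u j" | "u j < 0" by linarith
  then show ?thesis
  proof cases
    case 1
    have "finite {k. 0 < k \<and> k < j \<and> \<bar>u k\<bar> < u j}" by (rule finite_subset[of _ "{0..j}"]) auto
    then have "blen (u \<circ> refl1 j) = blen u + 1 \<longleftrightarrow> {k. 0 < k \<and> k < j \<and> \<bar>u k\<bar> < u j} = {}"
      using blen_comp_refl1[OF u K(2) j K(1) 1] by simp
    also have "\<dots> \<longleftrightarrow> (\<forall>k. 0 < k \<and> k < j \<longrightarrow> u j \<le> \<bar>u k\<bar>)"
      by (auto simp flip: not_less)
    also have "\<dots> \<longleftrightarrow> cover1_cond u j"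
      using 1 by (simp add: cover1_cond_def)
    finally show ?thesis .
  next
    case 2
    let ?w = "u \<circ> refl1 j"
    have "0 < ?w j" using comp_refl1_apply(1)[OF u j] 2 by simp
    from blen_comp_refl1[OF signed_perm_comp[OF u signed_perm_refl1]
        fixed_beyond_comp[OF K(2) fixed_beyond_refl1[OF j K(1)]] j K(1) this]
    have "blen ?w < blen u" unfolding comp_refl1_refl1 by linarith
    then show ?thesis using 2 by (simp add: cover1_cond_def)
  qed
qed

lemma blen_less_comp_refl2:
  assumes u: "signed_perm u" and pq: "0 < p" "p < q" and pos: "0 < u p + u q"
  shows "blen u < blen (u \<circ> refl2 p q)"
proof -
  obtain K where K: "q \<le> K" "fixed_beyond K u" using signed_perm_fixed_beyond[OF u] by blast
  show ?thesis
  proof (cases "u p < 0 \<or> u q < 0")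
    case True
    have "0 \<le> (\<Sum>k\<in>{1..K}. of_bool (k < p \<and> - u q < u k \<and> u k < u p) + of_bool (k < p \<and> - u p < u k \<and> u k < u q) :: int)"
      "0 \<le> (\<Sum>k\<in>{1..K}. of_bool (p < k \<and> k < q \<and> - u p < u k \<and> u k < u q) :: int)"
      by (auto intro!: sum_nonneg)
    then show ?thesis using blen_comp_refl2_mixed[OF u K(2) pq K(1) pos True] by linarith
  next
    case False
    have "u p \<noteq> 0" "u q \<noteq> 0" using signed_perm_eq_0_iff[OF u] pq by auto
    then show ?thesis using blen_comp_refl2_pos[OF u K(2) pq K(1)] False by fastforce
  qed
qed

lemma blen_comp_refl2_mixed_eq_Suc_iff:
  assumes u: "signed_perm u" and K: "fixed_beyond K u" and pq: "0 < p" "p < q" "q \<le> K"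
    and pos: "0 < u p + u q" and mixed: "u p < 0 \<or> u q < 0"
  shows "blen (u \<circ> refl2 p q) = blen u + 1 \<longleftrightarrow> cover2_cond u p q"
proof -
  let ?X = "\<lambda>k. of_bool (k < p \<and> - u q < u k \<and> u k < u p) + (of_bool (k < p \<and> - u p < u k \<and> u k < u q) :: int)"
  let ?Y = "\<lambda>k. of_bool (p < k \<and> k < q \<and> - u p < u k \<and> u k < u q) :: int"
  have "(\<Sum>k\<in>{1..K}. ?X k) = 0 \<longleftrightarrow> (\<forall>k\<in>{1..K}. ?X k = 0)"
    "(\<Sum>k\<in>{1..K}. ?Y k) = 0 \<longleftrightarrow> (\<forall>k\<in>{1..K}. ?Y k = 0)"
    by (simp_all add: sum_nonneg_eq_0_iff del: sum_of_bool_eq)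
  moreover have "?X k = 0 \<longleftrightarrow> \<not> (k < p \<and> - u q < u k \<and> u k < u p) \<and> \<not> (k < p \<and> - u p < u k \<and> u k < u q)" for k
    by (auto simp: of_bool_def)
  then have "(\<forall>k\<in>{1..K}. ?X k = 0) \<longleftrightarrow>
      (\<forall>k. 0 < k \<and> k < p \<longrightarrow> \<not> (- u q < u k \<and> u k < u p) \<and> \<not> (- u p < u k \<and> u k < u q))"
    using pq by auto
  moreover have "(\<forall>k\<in>{1..K}. ?Y k = 0) \<longleftrightarrow> (\<forall>k. p < k \<and> k < q \<longrightarrow> \<not> (- u p < u k \<and> u k < u q))"
    using pq by auto
  moreover have "0 \<le> (\<Sum>k\<in>{1..K}. ?X k)" "0 \<le> (\<Sum>k\<in>{1..K}. ?Y k)"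
    by (auto intro!: sum_nonneg)
  then have "blen (u \<circ> refl2 p q) = blen u + 1 \<longleftrightarrow> (\<Sum>k\<in>{1..K}. ?X k) = 0 \<and> (\<Sum>k\<in>{1..K}. ?Y k) = 0"
    using blen_comp_refl2_mixed[OF u K pq pos mixed] by linarith
  ultimately show ?thesis
    using pos mixed unfolding cover2_cond_def by presburger
qed

lemma blen_comp_refl2_eq_Suc_iff:
  assumes u: "signed_perm u" and pq: "0 < p" "p < q"
  shows "blen (u \<circ> refl2 p q) = blen u + 1 \<longleftrightarrow> cover2_cond u p q"
proof -
  obtain K where K: "q \<le> K" "fixed_beyond K u" using signed_perm_fixed_beyond[OF u] by blast
  have "u p \<noteq> u (- q)" using signed_perm_eq_iff[OF u] pq by simp
  then have "u p + u q \<noteq> 0" by (simp add: signed_perm_odd[OF u])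
  moreover have "u p \<noteq> 0" "u q \<noteq> 0" using signed_perm_eq_0_iff[OF u] pq by auto
  ultimately consider (pos) "0 < u p" "0 < u q" | (mixed) "0 < u p + u q" "u p < 0 \<or> u q < 0"
    | (neg) "u p + u q < 0"
    by linarith
  then show ?thesis
  proof cases
    case pos
    then show ?thesis
      using blen_comp_refl2_pos[OF u K(2) pq K(1)] by (auto simp: cover2_cond_def)
  next
    case mixed
    then show ?thesis by (rule blen_comp_refl2_mixed_eq_Suc_iff[OF u K(2) pq K(1)])
  next
    case neg
    let ?w = "u \<circ> refl2 p q"
    have "0 < ?w p + ?w q" using comp_refl2_apply[OF u pq] neg by simp
    from blen_less_comp_refl2[OF signed_perm_comp[OF u signed_perm_refl2[OF pq]] pq this]
    have "blen ?w < blen u" unfolding comp_refl2_refl2[OF pq] .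
    then show ?thesis using neg by (simp add: cover2_cond_def)
  qed
qed

lemma cover0_iff:
  "cover0 u w \<longleftrightarrow> signed_perm u \<and> signed_perm w \<and>
     ((\<exists>j>0. w = u \<circ> refl1 j \<and> cover1_cond u j) \<or>
      (\<exists>p q. 0 < p \<and> p < q \<and> w = u \<circ> refl2 p q \<and> cover2_cond u p q))"
proof (cases "signed_perm u")
  case u: True
  have inv_comp: "inv u \<circ> w = t \<longleftrightarrow> w = u \<circ> t" for t
  proof
    assume "inv u \<circ> w = t"
    then have "u \<circ> (inv u \<circ> w) = u \<circ> t" by simp
    then show "w = u \<circ> t" using signed_perm_f_inv_f[OF u] by (simp add: comp_def)
  next
    assume "w = u \<circ> t"
    then show "inv u \<circ> w = t" using signed_perm_inv_f_f[OF u] by (auto simp: fun_eq_iff)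
  qed
  have "cover0 u w \<longleftrightarrow> signed_perm w \<and> blen w = blen u + 1 \<and>
      ((\<exists>j>0. w = u \<circ> refl1 j) \<or> (\<exists>p q. 0 < p \<and> p < q \<and> w = u \<circ> refl2 p q))"
    unfolding cover0_def inv_comp using u by blast
  then show ?thesis
    using u by (auto simp: blen_comp_refl1_eq_Suc_iff blen_comp_refl2_eq_Suc_iff)
qed (simp add: cover0_def)

definition bruhat0_crit :: "(int \<Rightarrow> int) \<Rightarrow> (int \<Rightarrow> int) \<Rightarrow> bool" where
  "bruhat0_crit u w \<longleftrightarrow> (\<forall>p>0. w p \<le> u p) \<and> (\<forall>a b. 0 < a \<and> a < b \<and> u a < u b \<longrightarrow> w a < w b)"

lemma bruhat0_crit_refl: "bruhat0_crit u u"
  by (simp add: bruhat0_crit_def)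

lemma bruhat0_crit_trans: "bruhat0_crit u v \<Longrightarrow> bruhat0_crit v w \<Longrightarrow> bruhat0_crit u w"
  unfolding bruhat0_crit_def by (meson order_trans)

lemma bruhat0_crit_le: "bruhat0_crit u w \<Longrightarrow> 0 < p \<Longrightarrow> w p \<le> u p"
  by (simp add: bruhat0_crit_def)

lemma bruhat0_crit_less: "bruhat0_crit u w \<Longrightarrow> 0 < a \<Longrightarrow> a < b \<Longrightarrow> u a < u b \<Longrightarrow> w a < w b"
  by (simp add: bruhat0_crit_def)

lemma bruhat0_crit_ge_neg:
  assumes "signed_perm u" "signed_perm w" "bruhat0_crit u w" "k < 0"
  shows "u k \<le> w k"
  using bruhat0_crit_le[OF assms(3), of "- k"] assms by (simp add: signed_perm_odd)

lemma bruhat0_crit_comp_refl1: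
  assumes u: "signed_perm u" and j: "0 < j" and cond: "cover1_cond u j"
  shows "bruhat0_crit u (u \<circ> refl1 j)"
proof -
  let ?v = "u \<circ> refl1 j"
  have vj: "?v j = - u j" and vk: "\<And>k. 0 < k \<Longrightarrow> k \<noteq> j \<Longrightarrow> ?v k = u k"
    using comp_refl1_apply[OF u j] by auto
  have pos: "0 < u j" and gap: "\<And>k. 0 < k \<Longrightarrow> k < j \<Longrightarrow> u j \<le> \<bar>u k\<bar>"
    using cond by (auto simp: cover1_cond_def)
  have ne: "u k \<noteq> - u j" if "0 < k" for k
    using signed_perm_eq_iff[OF u, of k "- j"] j that by (simp add: signed_perm_odd[OF u])
  show ?thesis unfolding bruhat0_crit_def
  proof (intro conjI allI impI)
    fix k :: int assume "0 < k" then show "?v k \<le> u k" using vj vk pos by (cases "k = j") auto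
  next
    fix a b :: int assume ab: "0 < a \<and> a < b \<and> u a < u b"
    then show "?v a < ?v b"
      using vj vk[of a] vk[of b] pos gap[of a] ne[of a] by (cases "b = j"; cases "a = j") auto
  qed
qed

lemma bruhat0_crit_comp_refl2:
  assumes u: "signed_perm u" and pq: "0 < p" "p < q" and cond: "cover2_cond u p q"
  shows "bruhat0_crit u (u \<circ> refl2 p q)"
proof -
  let ?v = "u \<circ> refl2 p q"
  have vp: "?v p = - u q" and vq: "?v q = - u p"
    and vk: "\<And>k. 0 < k \<Longrightarrow> k \<noteq> p \<Longrightarrow> k \<noteq> q \<Longrightarrow> ?v k = u k"
    using comp_refl2_apply[OF u pq] by auto
  have pos: "0 < u p + u q"
    and left: "\<And>k. 0 < k \<Longrightarrow> k < p \<Longrightarrow> \<not> (- u q < u k \<and> u k < u p) \<and> \<not> (- u p < u k \<and> u k < u q)"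
    and middle: "\<And>k. p < k \<Longrightarrow> k < q \<Longrightarrow> \<not> (- u p < u k \<and> u k < u q)"
    using cond by (auto simp: cover2_cond_def)
  have ne: "u k \<noteq> - u q" "u k \<noteq> - u p" if "0 < k" for k
    using signed_perm_eq_iff[OF u, of k "- q"] signed_perm_eq_iff[OF u, of k "- p"] that pq
    by (auto simp: signed_perm_odd[OF u])
  show ?thesis unfolding bruhat0_crit_def
  proof (intro conjI allI impI)
    fix k :: int assume "0 < k"
    then show "?v k \<le> u k" using vp vq vk pos by (cases "k = p"; cases "k = q") auto
  next
    fix a b :: int assume ab: "0 < a \<and> a < b \<and> u a < u b"
    have below_q: "\<not> (- u p < u a \<and> u a < u q)" if "a \<noteq> p" "a < q"
    proof (cases "a < p")
      case True
      then show ?thesis using left[of a] ab by blast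
    next
      case False
      then show ?thesis using middle[of a] that by simp
    qed
    show "?v a < ?v b"
      using ab vp vq vk[of a] vk[of b] pos left[of a] below_q ne[of a] pq
      by (cases "a = p"; cases "b = q"; cases "b = p"; cases "a = q") auto
  qed
qed

lemma cover0_imp_bruhat0_crit: "cover0 u w \<Longrightarrow> bruhat0_crit u w"
  by (auto simp: cover0_iff intro: bruhat0_crit_comp_refl1 bruhat0_crit_comp_refl2)

lemma bruhat0_imp_bruhat0_crit:
  assumes "bruhat0 u w"
  shows "bruhat0_crit u w"
proof -
  have "cover0\<^sup>*\<^sup>* u w" using assms by (simp add: bruhat0_def)
  then show ?thesis
    by (induction rule: rtranclp_induct)
      (auto intro: bruhat0_crit_refl bruhat0_crit_trans cover0_imp_bruhat0_crit)
qed

lemma bruhat0_crit_stable_values: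
  assumes u: "signed_perm u" and w: "signed_perm w" and crit: "bruhat0_crit u w"
    and drop: "\<And>k. 0 < k \<Longrightarrow> w k < u k \<Longrightarrow> \<bar>u k\<bar> \<notin> I"
  shows bruhat0_crit_stable: "\<bar>u k\<bar> \<in> I \<Longrightarrow> w k = u k"
    and bruhat0_crit_moved: "w k \<noteq> u k \<Longrightarrow> \<bar>w k\<bar> \<notin> I"
proof -
  have pos: "w k = u k" if "0 < k" "\<bar>u k\<bar> \<in> I" for k
    using drop[OF that(1)] bruhat0_crit_le[OF crit that(1)] that(2) by fastforce
  show stable: "w k = u k" if "\<bar>u k\<bar> \<in> I" for k
  proof (cases k "0::int" rule: linorder_cases)
    case less
    then have "w (- k) = u (- k)" using pos[of "- k"] that by (simp add: signed_perm_odd[OF u])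
    then show ?thesis by (simp add: signed_perm_odd[OF u] signed_perm_odd[OF w])
  qed (simp_all add: pos that signed_perm_zero[OF u] signed_perm_zero[OF w])
  show "\<bar>w k\<bar> \<notin> I" if "w k \<noteq> u k"
  proof
    assume "\<bar>w k\<bar> \<in> I"
    then have "w (inv u (w k)) = w k"
      using stable[of "inv u (w k)"] by (simp add: signed_perm_f_inv_f[OF u])
    then have "inv u (w k) = k" by (simp add: signed_perm_eq_iff[OF w])
    then show False using that signed_perm_f_inv_f[OF u, of "w k"] by simp
  qed
qed

context
  fixes u w :: "int \<Rightarrow> int" and j :: int
  assumes u: "signed_perm u" and w: "signed_perm w" and crit: "bruhat0_crit u w"
    and j: "0 < j" "w j < u j" "0 < u j" and least: "\<And>k. 0 < k \<Longrightarrow> w k < u k \<Longrightarrow> u j \<le> u k"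
begin

lemma refl1_step_drop: "0 < k \<Longrightarrow> w k < u k \<Longrightarrow> \<bar>u k\<bar> \<notin> {..<u j}"
  using least j by fastforce

lemma refl1_step_stable: "\<bar>u k\<bar> < u j \<Longrightarrow> w k = u k"
  using bruhat0_crit_stable[OF u w crit refl1_step_drop] by simp

lemma refl1_step_bound: "w j \<le> - u j"
  using bruhat0_crit_moved[OF u w crit refl1_step_drop, of j] j by auto

lemma bruhat0_crit_step_cover1: "cover1_cond u j"
  unfolding cover1_cond_def
proof (intro conjI allI impI)
  fix k assume k: "0 < k \<and> k < j"
  show "u j \<le> \<bar>u k\<bar>"
  proof (rule ccontr)
    assume small: "\<not> u j \<le> \<bar>u k\<bar>"
    then have "w k = u k" "u k < u j" using refl1_step_stable[of k] by auto
    then show False using bruhat0_crit_less[OF crit, of k j] k refl1_step_bound small by simp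
  qed
qed (use j in simp)

lemma bruhat0_crit_step_refl1: "bruhat0_crit (u \<circ> refl1 j) w"
proof -
  let ?v = "u \<circ> refl1 j"
  have vj: "?v j = - u j" and vk: "\<And>k. 0 < k \<Longrightarrow> k \<noteq> j \<Longrightarrow> ?v k = u k"
    using comp_refl1_apply[OF u j(1)] by auto
  have ne: "u k \<noteq> u j" "u k \<noteq> - u j" if "0 < k" "k \<noteq> j" for k
    using signed_perm_eq_iff[OF u, of k j] signed_perm_eq_iff[OF u, of k "- j"] that j
    by (auto simp: signed_perm_odd[OF u])
  show ?thesis
    unfolding bruhat0_crit_def
  proof (intro conjI allI impI)
    fix k :: int assume "0 < k"
    then show "w k \<le> ?v k" using vj vk refl1_step_bound bruhat0_crit_le[OF crit] by (cases "k = j") auto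
  next
    fix a b :: int assume ab: "0 < a \<and> a < b \<and> ?v a < ?v b"
    have from_j: "w j < w b" if "a = j"
    proof (cases "u b < u j")
      case True
      then have "w b = u b" using refl1_step_stable[of b] ab that vj vk[of b] by auto
      then show ?thesis using ab that vj vk[of b] refl1_step_bound by auto
    next
      case False
      then show ?thesis using ab that ne[of b] bruhat0_crit_less[OF crit, of j b] j by auto
    qed
    show "w a < w b"
      using ab vj vk[of a] vk[of b] j from_j bruhat0_crit_less[OF crit, of a b]
        bruhat0_crit_less[OF crit, of a j]
      by (cases "a = j"; cases "b = j") auto
  qed
qed

end

lemma cover2_cond_min_max:
  assumes ij: "0 < i" "0 < j" "i \<noteq> j" and pos: "0 < u i + u j" and mixed: "u i < 0 \<or> u j < 0"
    and gap_i: "\<And>k. 0 < k \<Longrightarrow> k < i \<Longrightarrow> \<not> (- u j < u k \<and> u k < u i)"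
    and gap_j: "\<And>k. 0 < k \<Longrightarrow> k < j \<Longrightarrow> \<not> (- u i < u k \<and> u k < u j)"
  shows "cover2_cond u (min i j) (max i j)"
proof (cases "i < j")
  case True
  then show ?thesis using assms by (auto simp: cover2_cond_def min_def max_def)
next
  case False
  then show ?thesis using assms by (auto simp: cover2_cond_def min_def max_def add.commute)
qed

lemma comp_refl2_min_max_apply:
  assumes u: "signed_perm u" and ij: "0 < i" "0 < j" "i \<noteq> j"
  shows "(u \<circ> refl2 (min i j) (max i j)) i = - u j" and "(u \<circ> refl2 (min i j) (max i j)) j = - u i"
    and "0 < k \<Longrightarrow> k \<noteq> i \<Longrightarrow> k \<noteq> j \<Longrightarrow> (u \<circ> refl2 (min i j) (max i j)) k = u k"
  using ij signed_perm_odd[OF u] by (auto simp: refl2_def min_def max_def)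

context
  fixes u w :: "int \<Rightarrow> int" and i j :: int
  assumes u: "signed_perm u" and w: "signed_perm w" and crit: "bruhat0_crit u w"
    and j: "0 < j" "w j < u j" "u j < 0" and least_j: "\<And>k. 0 < k \<Longrightarrow> w k < u k \<Longrightarrow> u j \<le> u k"
    and i: "0 < i" "w i < u i" "- u j < u i"
    and least_i: "\<And>k. 0 < k \<Longrightarrow> w k < u k \<Longrightarrow> - u j < u k \<Longrightarrow> u i \<le> u k"
begin

lemma refl2_step_drop: "0 < k \<Longrightarrow> w k < u k \<Longrightarrow> \<bar>u k\<bar> \<notin> {- u j<..<u i}"
  using least_j[of k] least_i[of k] by (cases "- u j < u k") auto

lemma refl2_step_stable: "- u j < \<bar>u k\<bar> \<Longrightarrow> \<bar>u k\<bar> < u i \<Longrightarrow> w k = u k"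
  using bruhat0_crit_stable[OF u w crit refl2_step_drop] by simp

lemma refl2_step_bounds: "w i \<le> - u j" "w j \<le> - u i"
  using bruhat0_crit_moved[OF u w crit refl2_step_drop, of i]
    bruhat0_crit_moved[OF u w crit refl2_step_drop, of j] i j
  by (auto simp: abs_less_iff)

lemma bruhat0_crit_step_cover2: "cover2_cond u (min i j) (max i j)"
proof (rule cover2_cond_min_max)
  fix k assume k: "0 < k" "k < i"
  show "\<not> (- u j < u k \<and> u k < u i)"
  proof
    assume between: "- u j < u k \<and> u k < u i"
    then have "w k = u k" using refl2_step_stable[of k] j by auto
    then show False using bruhat0_crit_less[OF crit k] between refl2_step_bounds by simp
  qed
next
  fix k assume k: "0 < k" "k < j"
  show "\<not> (- u i < u k \<and> u k < u j)"
  proof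
    assume between: "- u i < u k \<and> u k < u j"
    then have "w k = u k" using refl2_step_stable[of k] j by auto
    then show False using bruhat0_crit_less[OF crit k] between refl2_step_bounds by simp
  qed
qed (use i j in auto)

lemma refl2_step_ne: "i \<noteq> j"
  using i j by auto

lemma refl2_step_apply:
  "(u \<circ> refl2 (min i j) (max i j)) i = - u j" "(u \<circ> refl2 (min i j) (max i j)) j = - u i"
  "0 < k \<Longrightarrow> k \<noteq> i \<Longrightarrow> k \<noteq> j \<Longrightarrow> (u \<circ> refl2 (min i j) (max i j)) k = u k"
  using comp_refl2_min_max_apply[OF u i(1) j(1) refl2_step_ne] by auto

lemma refl2_step_from_i: "i < b \<Longrightarrow> b \<noteq> j \<Longrightarrow> - u j < u b \<Longrightarrow> w i < w b"
  using refl2_step_stable[of b] refl2_step_bounds j bruhat0_crit_less[OF crit i(1), of b]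
    signed_perm_eq_iff[OF u, of b i]
  by (cases "u b < u i") auto

lemma refl2_step_from_j: "j < b \<Longrightarrow> b \<noteq> i \<Longrightarrow> - u i < u b \<Longrightarrow> w j < w b"
  using refl2_step_stable[of b] refl2_step_bounds j bruhat0_crit_less[OF crit j(1), of b]
    signed_perm_eq_iff[OF u, of b j]
  by (cases "u b < u j") auto

lemma bruhat0_crit_step_refl2: "bruhat0_crit (u \<circ> refl2 (min i j) (max i j)) w"
  unfolding bruhat0_crit_def
proof (intro conjI allI impI)
  let ?v = "u \<circ> refl2 (min i j) (max i j)"
  fix k :: int assume "0 < k"
  then show "w k \<le> ?v k"
    using refl2_step_apply refl2_step_bounds bruhat0_crit_le[OF crit] by (cases "k = i"; cases "k = j") auto
next
  let ?v = "u \<circ> refl2 (min i j) (max i j)"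
  fix a b :: int assume ab: "0 < a \<and> a < b \<and> ?v a < ?v b"
  consider "a = i" | "a = j" | "a \<noteq> i" "a \<noteq> j" by blast
  then show "w a < w b"
  proof cases
    case 1
    then show ?thesis using refl2_step_from_i ab refl2_step_apply(1,2) refl2_step_apply(3)[of b] i j by (cases "b = j") auto
  next
    case 2
    then show ?thesis
      using refl2_step_from_j ab refl2_step_apply(1,2) refl2_step_apply(3)[of b] bruhat0_crit_less[OF crit j(1), of i] i j
      by (cases "b = i") auto
  next
    case 3
    have "?v b \<le> u b" using refl2_step_apply(1,2) refl2_step_apply(3)[of b] ab i j by (cases "b = i"; cases "b = j") auto
    then show ?thesis using bruhat0_crit_less[OF crit] ab 3 refl2_step_apply(3)[of a] by fastforce
  qed
qed

end

text \<open>The termination measure for the walk from \<open>u\<close> down to \<open>w\<close> through covers.\<close>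

definition pos_sum :: "int \<Rightarrow> (int \<Rightarrow> int) \<Rightarrow> int" where
  "pos_sum K f = (\<Sum>p\<in>{1..K}. f p)"

lemma pos_sum_comp_refl1:
  assumes u: "signed_perm u" and j: "0 < j" "j \<le> K"
  shows "pos_sum K (u \<circ> refl1 j) = pos_sum K u - 2 * u j"
proof -
  have "pos_sum K (u \<circ> refl1 j) - pos_sum K u = (\<Sum>i\<in>{j}. (u \<circ> refl1 j) i - u i)"
    unfolding pos_sum_def using j comp_refl1_apply(2)[OF u j(1)] by (intro sum_diff_supported) auto
  then show ?thesis using comp_refl1_apply(1)[OF u j(1)] by simp
qed

lemma pos_sum_comp_refl2:
  assumes u: "signed_perm u" and pq: "0 < p" "p < q" "q \<le> K"
  shows "pos_sum K (u \<circ> refl2 p q) = pos_sum K u - 2 * (u p + u q)"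
proof -
  have "pos_sum K (u \<circ> refl2 p q) - pos_sum K u = (\<Sum>i\<in>{p, q}. (u \<circ> refl2 p q) i - u i)"
    unfolding pos_sum_def using pq comp_refl2_apply(3)[OF u pq(1,2)] by (intro sum_diff_supported) auto
  then show ?thesis using comp_refl2_apply(1,2)[OF u pq(1,2)] pq by simp
qed

lemma pos_sum_mono: "bruhat0_crit u w \<Longrightarrow> pos_sum K w \<le> pos_sum K u"
  unfolding pos_sum_def by (intro sum_mono) (simp add: bruhat0_crit_le)

lemma moved_le_bound:
  "fixed_beyond K u \<Longrightarrow> fixed_beyond K w \<Longrightarrow> 0 < k \<Longrightarrow> w k \<noteq> u k \<Longrightarrow> k \<le> K"
  unfolding fixed_beyond_def by (metis abs_of_pos linorder_not_le)

lemma bruhat0_crit_exists_drop_above: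
  assumes u: "signed_perm u" and w: "signed_perm w" and crit: "bruhat0_crit u w"
    and Ku: "fixed_beyond K u" and Kw: "fixed_beyond K w"
    and j: "0 < j" "w j < u j" "u j < 0"
  shows "\<exists>k>0. w k < u k \<and> - u j < u k"
proof -
  define M where "M = - u j"
  define A where "A = {k \<in> {-K..K}. M < u k}"
  define B where "B = {k \<in> {-K..K}. M < w k}"
  have "card A = card B"
    using card_window_comp[OF u Ku, of "\<lambda>v. M < v"] card_window_comp[OF w Kw, of "\<lambda>v. M < v"]
    by (simp add: A_def B_def)
  moreover have "- j \<in> B - A"
    using j moved_le_bound[OF Ku Kw j(1)] by (auto simp: A_def B_def M_def signed_perm_odd[OF u] signed_perm_odd[OF w])
  moreover have "finite B" unfolding B_def by (rule finite_subset[of _ "{-K..K}"]) auto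
  ultimately have "\<not> A \<subseteq> B"
    using card_mono[of "B - {- j}" A] card_Diff1_less[of B "- j"] by auto
  then obtain k where "k \<in> A" "k \<notin> B" by blast
  then have k: "M < u k" "w k \<le> M" by (auto simp: A_def B_def)
  have "\<not> k < 0" using bruhat0_crit_ge_neg[OF u w crit, of k] k by auto
  moreover have "k \<noteq> 0" using k j signed_perm_zero[OF u] by (auto simp: M_def)
  ultimately have "0 < k" by simp
  then show ?thesis using k by (auto simp: M_def)
qed

lemma bruhat0_crit_exists_drop:
  assumes u: "signed_perm u" and w: "signed_perm w" and crit: "bruhat0_crit u w" and ne: "u \<noteq> w"
  shows "\<exists>k>0. w k < u k"
proof -
  obtain a where "u a \<noteq> w a" using ne by auto
  then have "u \<bar>a\<bar> \<noteq> w \<bar>a\<bar>" "a \<noteq> 0"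
    by (auto simp: abs_if signed_perm_odd[OF u] signed_perm_odd[OF w] signed_perm_zero[OF u] signed_perm_zero[OF w])
  then show ?thesis using bruhat0_crit_le[OF crit, of "\<bar>a\<bar>"] by (intro exI[of _ "\<bar>a\<bar>"]) auto
qed

lemma exists_least_drop:
  assumes Ku: "fixed_beyond K u" and Kw: "fixed_beyond K w" and ex: "\<exists>k>0. w k < u k \<and> P k"
  shows "\<exists>j>0. w j < u j \<and> P j \<and> j \<le> K \<and> (\<forall>k>0. w k < u k \<and> P k \<longrightarrow> u j \<le> u k)"
proof -
  define D where "D = {k \<in> {1..K}. w k < u k \<and> P k}"
  have inD: "k \<in> D \<longleftrightarrow> 0 < k \<and> w k < u k \<and> P k" for k
    using moved_le_bound[OF Ku Kw, of k] by (auto simp: D_def)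
  have "finite D" unfolding D_def by (rule finite_subset[of _ "{1..K}"]) auto
  moreover have "D \<noteq> {}" using ex inD by blast
  ultimately obtain j where "j \<in> D" "\<forall>k\<in>D. u j \<le> u k"
    using ex_is_arg_min_if_finite[of D u] unfolding is_arg_min_linorder by blast
  then show ?thesis using inD by (auto simp: D_def)
qed

lemma bruhat0_crit_step_pos:
  assumes u: "signed_perm u" and w: "signed_perm w" and crit: "bruhat0_crit u w" and Ku: "fixed_beyond K u"
    and j: "0 < j" "w j < u j" "0 < u j" "j \<le> K" and least: "\<And>k. 0 < k \<Longrightarrow> w k < u k \<Longrightarrow> u j \<le> u k"
  shows "\<exists>v. cover0 u v \<and> bruhat0_crit v w \<and> fixed_beyond K v \<and> pos_sum K v < pos_sum K u"
proof (intro exI conjI)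
  show "cover0 u (u \<circ> refl1 j)"
    using bruhat0_crit_step_cover1[OF u w crit j(1-3) least] j u
    by (auto simp: cover0_iff signed_perm_comp signed_perm_refl1)
  show "bruhat0_crit (u \<circ> refl1 j) w" by (rule bruhat0_crit_step_refl1[OF u w crit j(1-3) least])
  show "fixed_beyond K (u \<circ> refl1 j)" using fixed_beyond_comp[OF Ku fixed_beyond_refl1] j by simp
  show "pos_sum K (u \<circ> refl1 j) < pos_sum K u" using pos_sum_comp_refl1[OF u j(1,4)] j(3) by simp
qed

lemma bruhat0_crit_step_neg:
  assumes u: "signed_perm u" and w: "signed_perm w" and crit: "bruhat0_crit u w"
    and Ku: "fixed_beyond K u" and Kw: "fixed_beyond K w"
    and j: "0 < j" "w j < u j" "u j < 0" "j \<le> K" and least: "\<And>k. 0 < k \<Longrightarrow> w k < u k \<Longrightarrow> u j \<le> u k"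
  shows "\<exists>v. cover0 u v \<and> bruhat0_crit v w \<and> fixed_beyond K v \<and> pos_sum K v < pos_sum K u"
proof -
  obtain i where i: "0 < i" "w i < u i" "- u j < u i" "i \<le> K"
    and least': "\<And>k. 0 < k \<Longrightarrow> w k < u k \<Longrightarrow> - u j < u k \<Longrightarrow> u i \<le> u k"
    using exists_least_drop[OF Ku Kw, of "\<lambda>k. - u j < u k"]
      bruhat0_crit_exists_drop_above[OF u w crit Ku Kw j(1-3)] by auto
  define p q where "p = min i j" and "q = max i j"
  have "i \<noteq> j" using i j by auto
  then have pq: "0 < p" "p < q" "q \<le> K" using i j by (auto simp: p_def q_def)
  note step = bruhat0_crit_step_cover2[OF u w crit j(1-3) least i(1-3) least', folded p_def q_def]
    bruhat0_crit_step_refl2[OF u w crit j(1-3) least i(1-3) least', folded p_def q_def]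
  show ?thesis
  proof (intro exI conjI)
    show "cover0 u (u \<circ> refl2 p q)"
      using step pq u by (auto simp: cover0_iff signed_perm_comp signed_perm_refl2)
    show "bruhat0_crit (u \<circ> refl2 p q) w" by (rule step(2))
    show "fixed_beyond K (u \<circ> refl2 p q)" using fixed_beyond_comp[OF Ku fixed_beyond_refl2[OF pq]] .
    have "u p + u q = u i + u j" by (auto simp: p_def q_def min_def max_def)
    then show "pos_sum K (u \<circ> refl2 p q) < pos_sum K u" using pos_sum_comp_refl2[OF u pq] i by simp
  qed
qed

lemma bruhat0_crit_step:
  assumes u: "signed_perm u" and w: "signed_perm w" and crit: "bruhat0_crit u w" and ne: "u \<noteq> w"
    and Ku: "fixed_beyond K u" and Kw: "fixed_beyond K w"
  shows "\<exists>v. cover0 u v \<and> bruhat0_crit v w \<and> fixed_beyond K v \<and> pos_sum K v < pos_sum K u"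
proof -
  obtain j where j: "0 < j" "w j < u j" "j \<le> K" and least: "\<And>k. 0 < k \<Longrightarrow> w k < u k \<Longrightarrow> u j \<le> u k"
    using exists_least_drop[OF Ku Kw, of "\<lambda>_. True"] bruhat0_crit_exists_drop[OF u w crit ne] by auto
  have "u j \<noteq> 0" using j signed_perm_eq_0_iff[OF u] by simp
  then consider "0 < u j" | "u j < 0" by linarith
  then show ?thesis
  proof cases
    case 1
    then show ?thesis using bruhat0_crit_step_pos[OF u w crit Ku j(1,2) _ j(3) least] by blast
  next
    case 2
    then show ?thesis using bruhat0_crit_step_neg[OF u w crit Ku Kw j(1,2) _ j(3) least] by blast
  qed
qed

lemma bruhat0_crit_imp_rtranclp_cover0:
  assumes u: "signed_perm u" and w: "signed_perm w" and crit: "bruhat0_crit u w"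
  shows "cover0\<^sup>*\<^sup>* u w"
proof -
  obtain K where Ku: "fixed_beyond K u" and Kw: "fixed_beyond K w"
    using signed_perm_fixed_beyond[OF u, of 0] signed_perm_fixed_beyond[OF w] fixed_beyond_mono
    by (metis linorder_le_cases)
  show ?thesis
    using u Ku crit
  proof (induction "nat (pos_sum K u - pos_sum K w)" arbitrary: u rule: less_induct)
    case less
    show ?case
    proof (cases "u = w")
      case False
      then obtain v where v: "cover0 u v" "bruhat0_crit v w" "fixed_beyond K v" "pos_sum K v < pos_sum K u"
        using bruhat0_crit_step[OF less.prems(1) w less.prems(3) _ less.prems(2) Kw] by blast
      have "signed_perm v" using v(1) by (simp add: cover0_def)
      moreover have "nat (pos_sum K v - pos_sum K w) < nat (pos_sum K u - pos_sum K w)"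
        using v(4) pos_sum_mono[OF v(2), of K] by linarith
      ultimately have "cover0\<^sup>*\<^sup>* v w" using less.hyps v(2,3) by blast
      with v(1) show ?thesis by (rule converse_rtranclp_into_rtranclp)
    qed simp
  qed
qed

theorem bruhat0_iff_crit: "bruhat0 u w \<longleftrightarrow> signed_perm u \<and> signed_perm w \<and> bruhat0_crit u w"
  using bruhat0_imp_bruhat0_crit bruhat0_crit_imp_rtranclp_cover0 unfolding bruhat0_def by blast

section \<open>Sorting a half of the nonzero integers\<close>

definition signed_rank :: "int set \<Rightarrow> int \<Rightarrow> int" where
  "signed_rank S z = (if z \<in> S then int (card {s \<in> S. s \<le> z})
                      else if z = 0 then 0 else - int (card {s \<in> S. s \<le> - z}))"

locale signed_half =
  fixes S :: "int set" and L :: int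
  assumes half: "z \<noteq> 0 \<Longrightarrow> z \<in> S \<longleftrightarrow> - z \<notin> S"
    and zero_notin: "0 \<notin> S"
    and bounded_below: "z \<in> S \<Longrightarrow> - L \<le> z"
    and bound_nonneg: "0 \<le> L"
begin

lemma finite_le: "finite {s \<in> S. s \<le> z}"
  by (rule finite_subset[of _ "{-L..z}"]) (auto dest: bounded_below)

lemma card_le_beyond:
  assumes "L < z"
  shows "card {s \<in> S. s \<le> z} = nat z"
proof -
  have "bij_betw abs {s \<in> S. s \<le> z} {1..z}"
  proof (rule bij_betwI')
    fix x y assume "x \<in> {s \<in> S. s \<le> z}" "y \<in> {s \<in> S. s \<le> z}"
    then show "(\<bar>x\<bar> = \<bar>y\<bar>) = (x = y)" using half[of y] zero_notin by (auto simp: abs_eq_iff)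
  next
    fix x assume x: "x \<in> {s \<in> S. s \<le> z}"
    then have "x \<noteq> 0" using zero_notin by auto
    then show "\<bar>x\<bar> \<in> {1..z}" using x bounded_below[of x] assms by auto
  next
    fix y assume y: "y \<in> {1..z}"
    then have "y \<in> S \<or> - y \<in> S" using half[of y] by auto
    then show "\<exists>x\<in>{s \<in> S. s \<le> z}. y = \<bar>x\<bar>" using y by (auto intro: bexI[of _ "- y"])
  qed
  then show ?thesis by (simp add: bij_betw_same_card)
qed

lemma signed_rank_odd: "signed_rank S (- z) = - signed_rank S z"
  using half[of z] zero_notin by (auto simp: signed_rank_def)

lemma signed_rank_pos_iff: "0 < signed_rank S z \<longleftrightarrow> z \<in> S"
proof
  assume "z \<in> S"
  then have "card {s \<in> S. s \<le> z} > 0" using finite_le[of z] card_gt_0_iff by blast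
  then show "0 < signed_rank S z" using \<open>z \<in> S\<close> by (simp add: signed_rank_def)
qed (auto simp: signed_rank_def split: if_splits)

lemma signed_rank_strict_mono:
  assumes "a \<in> S" "b \<in> S" "a < b"
  shows "signed_rank S a < signed_rank S b"
proof -
  have "{s \<in> S. s \<le> a} \<subseteq> {s \<in> S. s \<le> b}" "b \<in> {s \<in> S. s \<le> b} - {s \<in> S. s \<le> a}"
    using assms by auto
  then have "{s \<in> S. s \<le> a} \<subset> {s \<in> S. s \<le> b}" by blast
  then have "card {s \<in> S. s \<le> a} < card {s \<in> S. s \<le> b}" using finite_le by (intro psubset_card_mono)
  then show ?thesis using assms by (simp add: signed_rank_def)
qed

lemma signed_rank_less_iff: "a \<in> S \<Longrightarrow> b \<in> S \<Longrightarrow> signed_rank S a < signed_rank S b \<longleftrightarrow> a < b"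
  using signed_rank_strict_mono by (metis not_less_iff_gr_or_eq order_less_asym)

lemma signed_rank_beyond:
  assumes "L < \<bar>z\<bar>"
  shows "signed_rank S z = z"
proof -
  have pos: "signed_rank S z = z" if "L < z" for z
    using that half[of z] bounded_below[of "- z"] card_le_beyond[OF that] bound_nonneg
    by (auto simp: signed_rank_def)
  show ?thesis
    using pos[of z] pos[of "- z"] signed_rank_odd[of z] assms by (cases "0 \<le> z") auto
qed

lemma signed_rank_eq_0_iff: "signed_rank S z = 0 \<longleftrightarrow> z = 0"
  using signed_rank_pos_iff[of z] signed_rank_pos_iff[of "- z"] signed_rank_odd[of z] half[of z]
  by (cases "z = 0") (auto simp: signed_rank_def)

lemma inj_signed_rank: "inj (signed_rank S)"
proof (rule injI)
  fix a b assume eq: "signed_rank S a = signed_rank S b"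
  have in_S: "a = b" if "a \<in> S" "b \<in> S" "signed_rank S a = signed_rank S b" for a b
    using that signed_rank_less_iff[of a b] signed_rank_less_iff[of b a] by (cases a b rule: linorder_cases) auto
  have "a \<in> S \<longleftrightarrow> b \<in> S" using eq signed_rank_pos_iff[of a] signed_rank_pos_iff[of b] by simp
  moreover have "a = 0 \<longleftrightarrow> b = 0" using eq signed_rank_eq_0_iff[of a] signed_rank_eq_0_iff[of b] by simp
  moreover have "signed_rank S (- a) = signed_rank S (- b)" using eq by (simp add: signed_rank_odd)
  ultimately show "a = b"
    using in_S[of a b] in_S[of "- a" "- b"] eq half[of a] half[of b] by fastforce
qed

lemma signed_perm_signed_rank: "signed_perm (signed_rank S)"
proof -
  define W where "W = {-(L + 1)..L + 1}"
  have le: "int (card {s \<in> S. s \<le> y}) \<le> L + 1" if "y \<le> L + 1" for y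
  proof -
    have "card {s \<in> S. s \<le> y} \<le> card {s \<in> S. s \<le> L + 1}"
      using that finite_le by (intro card_mono) auto
    then show ?thesis using card_le_beyond[of "L + 1"] bound_nonneg by simp
  qed
  have into: "signed_rank S z \<in> W" if "z \<in> W" for z
    using that le[of z] le[of "- z"] by (auto simp: W_def signed_rank_def)
  have "signed_rank S ` W = W"
    using into by (intro endo_inj_surj) (auto simp: W_def intro: inj_on_subset[OF inj_signed_rank])
  have "z \<in> range (signed_rank S)" for z
  proof (cases "\<bar>z\<bar> \<le> L")
    case True
    then have "z \<in> W" by (auto simp: W_def abs_le_iff)
    then show ?thesis using \<open>signed_rank S ` W = W\<close> by auto
  next
    case False
    then show ?thesis using signed_rank_beyond[of z] by (metis not_le rangeI)
  qed
  then have "surj (signed_rank S)" by blast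
  moreover have "{z. signed_rank S z \<noteq> z} \<subseteq> {-L..L}"
    using signed_rank_beyond by (force simp: abs_le_iff)
  then have "finite {z. signed_rank S z \<noteq> z}" by (rule finite_subset) simp
  ultimately show ?thesis
    using inj_signed_rank signed_rank_odd by (simp add: signed_perm_def bij_def)
qed

end

text \<open>One of \<open>v\<close>, \<open>- v\<close> for each \<open>v \<noteq> 0\<close>: the points not raised by \<open>\<zeta>\<close>, fixed points taken
  with positive sign. This is where \<open>u\<close> must send the positive positions if \<open>u \<le>\<^sub>0 \<zeta> u\<close>.\<close>

definition descent_half :: "(int \<Rightarrow> int) \<Rightarrow> int set" where
  "descent_half \<zeta> = {v. \<zeta> v < v \<or> (\<zeta> v = v \<and> 0 < v)}"

lemma signed_half_image_descent_half:
  assumes z: "signed_perm \<zeta>" and K: "0 \<le> K" "fixed_beyond K \<zeta>"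
  shows "signed_half (\<zeta> ` descent_half \<zeta>) K"
proof
  have in_image: "\<zeta> v \<in> \<zeta> ` descent_half \<zeta> \<longleftrightarrow> v \<in> descent_half \<zeta>" for v
    by (rule inj_image_mem_iff[OF signed_perm_inj[OF z]])
  fix x :: int
  obtain v where v: "\<zeta> v = x" using signed_perm_f_inv_f[OF z] by metis
  show "x \<noteq> 0 \<Longrightarrow> x \<in> \<zeta> ` descent_half \<zeta> \<longleftrightarrow> - x \<notin> \<zeta> ` descent_half \<zeta>"
    using in_image[of v] in_image[of "- v"] v signed_perm_zero[OF z]
    by (auto simp: descent_half_def signed_perm_odd[OF z])
  show "0 \<notin> \<zeta> ` descent_half \<zeta>"
    using in_image[of 0] signed_perm_zero[OF z] by (simp add: descent_half_def)
  show "- K \<le> x" if "x \<in> \<zeta> ` descent_half \<zeta>"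
  proof (cases "\<bar>v\<bar> \<le> K")
    case True
    then show ?thesis using fixed_beyond_window[OF z K(2) True] v by simp
  next
    case False
    then have "\<zeta> v = v" using K(2) by (simp add: fixed_beyond_def)
    moreover have "v \<in> descent_half \<zeta>" using that in_image[of v] v by simp
    ultimately show ?thesis using K(1) v by (simp add: descent_half_def)
  qed
qed (rule K(1))

lemma exists_sorting_perm:
  assumes z: "signed_perm \<zeta>"
  shows "\<exists>u. signed_perm u \<and> (\<forall>p>0. u p \<in> descent_half \<zeta>) \<and> (\<forall>p q. 0 < p \<and> p < q \<longrightarrow> \<zeta> (u p) < \<zeta> (u q))"
proof -
  define S where "S = \<zeta> ` descent_half \<zeta>"
  obtain K where K: "0 \<le> K" "fixed_beyond K \<zeta>" using signed_perm_fixed_beyond[OF z] by blast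
  interpret signed_half S K unfolding S_def by (rule signed_half_image_descent_half[OF z K])
  define u where "u = inv (signed_rank S \<circ> \<zeta>)"
  have sort: "signed_perm (signed_rank S \<circ> \<zeta>)" by (rule signed_perm_comp[OF signed_perm_signed_rank z])
  have rank_u: "signed_rank S (\<zeta> (u p)) = p" for p
    using signed_perm_f_inv_f[OF sort, of p] by (simp add: u_def)
  have uS: "\<zeta> (u p) \<in> S" if "0 < p" for p
    using signed_rank_pos_iff[of "\<zeta> (u p)"] rank_u[of p] that by simp
  have "u p \<in> descent_half \<zeta>" if "0 < p" for p
    using uS[OF that] by (simp add: S_def inj_image_mem_iff[OF signed_perm_inj[OF z]])
  moreover have "\<zeta> (u p) < \<zeta> (u q)" if "0 < p" "p < q" for p q
    using signed_rank_less_iff[OF uS uS, of p q] rank_u that by simp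
  moreover have "signed_perm u" unfolding u_def by (rule signed_perm_inv[OF sort])
  ultimately show ?thesis by blast
qed

section \<open>The Lagrangian order\<close>

definition lag_conditions :: "(int \<Rightarrow> int) \<Rightarrow> (int \<Rightarrow> int) \<Rightarrow> bool" where
  "lag_conditions \<eta> \<zeta> \<longleftrightarrow>
     (\<forall>a. a \<noteq> 0 \<and> a > \<eta> a \<longrightarrow> \<eta> a \<ge> \<zeta> a) \<and>
     (\<forall>a b. a \<noteq> 0 \<and> b \<noteq> 0 \<and> a < b \<and> a > \<zeta> a \<and> b > \<zeta> b \<and> \<zeta> a < \<zeta> b \<longrightarrow> \<eta> a < \<eta> b)"

lemma bruhat0_crit_drop_pos:
  assumes u: "signed_perm u" and w: "signed_perm w" and crit: "bruhat0_crit u w" and drop: "w k < u k"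
  shows "0 < k"
proof -
  have "k \<noteq> 0" using drop signed_perm_zero[OF u] signed_perm_zero[OF w] by auto
  moreover have "\<not> k < 0" using bruhat0_crit_ge_neg[OF u w crit] drop by force
  ultimately show ?thesis by simp
qed

lemma descent_half_bounds:
  assumes e: "signed_perm \<eta>" and z: "signed_perm \<zeta>"
    and cond: "lag_conditions \<eta> \<zeta>" and v: "v \<in> descent_half \<zeta>"
  shows "\<zeta> v \<le> \<eta> v" and "\<eta> v \<le> v"
proof -
  have down: "\<zeta> a \<le> \<eta> a" if "a \<noteq> 0" "\<eta> a < a" for a
    using cond that by (auto simp: lag_conditions_def)
  have v0: "v \<noteq> 0" and zv: "\<zeta> v \<le> v"
    using v signed_perm_zero[OF z] by (auto simp: descent_half_def)
  show ev: "\<eta> v \<le> v"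
  proof (rule ccontr)
    assume "\<not> \<eta> v \<le> v"
    then have "\<zeta> (- v) \<le> \<eta> (- v)" using down[of "- v"] v0 by (simp add: signed_perm_odd[OF e])
    then show False using \<open>\<not> \<eta> v \<le> v\<close> zv by (simp add: signed_perm_odd[OF e] signed_perm_odd[OF z])
  qed
  show "\<zeta> v \<le> \<eta> v" using down[OF v0] ev zv by (cases "\<eta> v < v") auto
qed

lemma lag_conditions_ascent:
  assumes e: "signed_perm \<eta>" and z: "signed_perm \<zeta>" and cond: "lag_conditions \<eta> \<zeta>"
    and vD: "v \<in> descent_half \<zeta>" "v' \<in> descent_half \<zeta>" and less: "v < v'" "\<zeta> v < \<zeta> v'"
  shows "\<eta> v < \<eta> v'"
proof -
  note bounds = descent_half_bounds[OF e z cond]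
  have "v \<noteq> 0" "v' \<noteq> 0" using vD signed_perm_zero[OF z] by (auto simp: descent_half_def)
  show ?thesis
  proof (cases "\<zeta> v' = v'")
    case True
    then have "\<eta> v' = v'" using bounds[OF vD(2)] by simp
    then show ?thesis using bounds(2)[OF vD(1)] less by simp
  next
    case False
    then have v': "\<zeta> v' < v'" using vD(2) by (auto simp: descent_half_def)
    show ?thesis
    proof (cases "\<zeta> v = v")
      case True
      then have "\<eta> v = v" using bounds[OF vD(1)] by simp
      moreover have "\<eta> v' \<noteq> \<eta> v" using signed_perm_eq_iff[OF e] less by simp
      ultimately show ?thesis using bounds(1)[OF vD(2)] less True by fastforce
    next
      case False
      then have "\<zeta> v < v" using vD(1) by (auto simp: descent_half_def)
      then show ?thesis
        using cond \<open>v \<noteq> 0\<close> \<open>v' \<noteq> 0\<close> v' less by (simp add: lag_conditions_def)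
    qed
  qed
qed

lemma lag_conditions_imp_bruhat0_crit:
  assumes e: "signed_perm \<eta>" and z: "signed_perm \<zeta>" and cond: "lag_conditions \<eta> \<zeta>"
    and half: "\<And>p. 0 < p \<Longrightarrow> u p \<in> descent_half \<zeta>"
    and sorted: "\<And>p q. 0 < p \<Longrightarrow> p < q \<Longrightarrow> \<zeta> (u p) < \<zeta> (u q)"
  shows "bruhat0_crit u (\<eta> \<circ> u)" and "bruhat0_crit (\<eta> \<circ> u) (\<zeta> \<circ> u)"
proof -
  note bounds = descent_half_bounds[OF e z cond]
  show "bruhat0_crit (\<eta> \<circ> u) (\<zeta> \<circ> u)"
    using bounds(1)[OF half] sorted by (auto simp: bruhat0_crit_def)
  show "bruhat0_crit u (\<eta> \<circ> u)"
    using bounds(2)[OF half] lag_conditions_ascent[OF e z cond half half] sorted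
    by (auto simp: bruhat0_crit_def)
qed

lemma bruhat0_crit_imp_lag_conditions:
  assumes e: "signed_perm \<eta>" and z: "signed_perm \<zeta>" and u: "signed_perm u"
    and crit1: "bruhat0_crit u (\<eta> \<circ> u)" and crit2: "bruhat0_crit (\<eta> \<circ> u) (\<zeta> \<circ> u)"
  shows "lag_conditions \<eta> \<zeta>"
proof -
  have eu: "signed_perm (\<eta> \<circ> u)" and zu: "signed_perm (\<zeta> \<circ> u)"
    using signed_perm_comp u e z by auto
  have crit3: "bruhat0_crit u (\<zeta> \<circ> u)" by (rule bruhat0_crit_trans[OF crit1 crit2])
  have ua: "u (inv u a) = a" for a by (rule signed_perm_f_inv_f[OF u])
  have pos: "0 < inv u a" if "f a < a" "signed_perm (f \<circ> u)" "bruhat0_crit u (f \<circ> u)" for f a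
    using bruhat0_crit_drop_pos[OF u that(2,3), of "inv u a"] that(1) ua by simp
  show ?thesis unfolding lag_conditions_def
  proof (intro conjI allI impI)
    fix a assume a: "a \<noteq> 0 \<and> \<eta> a < a"
    then have "0 < inv u a" using pos[OF _ eu crit1] by blast
    then show "\<zeta> a \<le> \<eta> a" using bruhat0_crit_le[OF crit2] ua[of a] by (metis comp_apply)
  next
    fix a b assume ab: "a \<noteq> 0 \<and> b \<noteq> 0 \<and> a < b \<and> \<zeta> a < a \<and> \<zeta> b < b \<and> \<zeta> a < \<zeta> b"
    define p q where "p = inv u a" and "q = inv u b"
    have p: "0 < p" and q: "0 < q" using pos[OF _ zu crit3] ab by (auto simp: p_def q_def)
    have up: "u p = a" "u q = b" by (simp_all add: p_def q_def ua)
    then have "p \<noteq> q" using ab by auto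
    then consider "p < q" | "q < p" by linarith
    then show "\<eta> a < \<eta> b"
    proof cases
      case 1
      then show ?thesis using bruhat0_crit_less[OF crit1 p 1] up ab by simp
    next
      case 2
      have "\<eta> a \<noteq> \<eta> b" using signed_perm_eq_iff[OF e] ab by simp
      moreover have "\<not> \<eta> b < \<eta> a"
        using bruhat0_crit_less[OF crit2 q 2] up ab by auto
      ultimately show ?thesis by simp
    qed
  qed
qed

theorem lag_le_iff:
  assumes e: "signed_perm \<eta>" and z: "signed_perm \<zeta>"
  shows "lag_le \<eta> \<zeta> \<longleftrightarrow> lag_conditions \<eta> \<zeta>"
proof
  assume "lag_le \<eta> \<zeta>"
  then obtain u where "signed_perm u" "bruhat0 u (\<eta> \<circ> u)" "bruhat0 (\<eta> \<circ> u) (\<zeta> \<circ> u)"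
    unfolding lag_le_def by blast
  then show "lag_conditions \<eta> \<zeta>"
    using bruhat0_crit_imp_lag_conditions[OF e z] by (simp add: bruhat0_iff_crit)
next
  assume cond: "lag_conditions \<eta> \<zeta>"
  obtain u where u: "signed_perm u" "\<forall>p>0. u p \<in> descent_half \<zeta>"
    "\<forall>p q. 0 < p \<and> p < q \<longrightarrow> \<zeta> (u p) < \<zeta> (u q)"
    using exists_sorting_perm[OF z] by blast
  then show "lag_le \<eta> \<zeta>"
    using lag_conditions_imp_bruhat0_crit[OF e z cond] signed_perm_comp[OF e u(1)] signed_perm_comp[OF z u(1)]
    unfolding lag_le_def bruhat0_iff_crit by blast
qed

section \<open>The length formula\<close>

text \<open>Both sides count the points above \<open>f\<close> that \<open>z\<close> does not send above \<open>f\<close>.\<close>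

lemma card_cross_down_eq_up:
  assumes z: "signed_perm z" and K: "fixed_beyond K z" and f: "z f = f"
  shows "card {x \<in> {-K..K}. z x < f \<and> f < x} = card {x \<in> {-K..K}. x < f \<and> f < z x}"
proof -
  define W where "W = {-K..K}"
  define T where "T = {x \<in> W. f < x}"
  have fin: "finite W" by (simp add: W_def)
  have "z x \<noteq> f" if "x \<noteq> f" for x using signed_perm_eq_iff[OF z, of x f] f that by simp
  then have down: "{x \<in> W. z x < f \<and> f < x} = {x \<in> T. \<not> f < z x}"
    and up: "{x \<in> W. x < f \<and> f < z x} = {x \<in> W - T. f < z x}"
    unfolding T_def using f by (auto simp: not_less order.order_iff_strict signed_perm_eq_iff[OF z])
  have "card T = card {x \<in> W. f < z x}"
    unfolding T_def W_def by (rule card_window_comp[OF z K, symmetric])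
  also have "\<dots> = card {x \<in> T. f < z x} + card {x \<in> W - T. f < z x}"
    using fin by (subst card_Un_disjoint[symmetric]) (auto intro: arg_cong[where f = card] simp: T_def)
  finally have "card T = card {x \<in> T. f < z x} + card {x \<in> W - T. f < z x}" .
  moreover have "card T = card {x \<in> T. f < z x} + card {x \<in> T. \<not> f < z x}"
    using fin by (subst card_Un_disjoint[symmetric]) (auto intro: arg_cong[where f = card] simp: T_def)
  ultimately show ?thesis unfolding W_def[symmetric] down up by simp
qed

lemma card_cross_down_uminus:
  assumes z: "signed_perm z" and K: "fixed_beyond K z" and f: "z f = f"
  shows "card {x \<in> {-K..K}. z x < - f \<and> - f < x} = card {x \<in> {-K..K}. z x < f \<and> f < x}"
proof -
  have "{x \<in> {-K..K}. z x < - f \<and> - f < x} = uminus ` {x \<in> {-K..K}. x < f \<and> f < z x}"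
  proof (intro set_eqI iffI)
    fix x assume "x \<in> {x \<in> {-K..K}. z x < - f \<and> - f < x}"
    then show "x \<in> uminus ` {x \<in> {-K..K}. x < f \<and> f < z x}"
      by (intro image_eqI[of _ _ "- x"]) (auto simp: signed_perm_odd[OF z])
  qed (auto simp: signed_perm_odd[OF z])
  then have "card {x \<in> {-K..K}. z x < - f \<and> - f < x} = card {x \<in> {-K..K}. x < f \<and> f < z x}"
    by (simp add: card_image)
  then show ?thesis using card_cross_down_eq_up[OF assms] by simp
qed

definition lag_formula :: "(int \<Rightarrow> int) \<Rightarrow> int" where
  "lag_formula \<zeta> =
     (\<Sum>a\<in>{a. a \<noteq> 0 \<and> a > \<zeta> a \<and> 0 > \<zeta> a}. \<bar>\<zeta> a\<bar>)
     - int (card {(a, b). 0 < a \<and> a < b \<and> a = \<zeta> a \<and> a > \<zeta> b})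
     - int (card {(a, b). a \<noteq> 0 \<and> b \<noteq> 0 \<and> a < b \<and> a > \<zeta> a \<and> b > \<zeta> b \<and> \<zeta> a > \<zeta> b})
     - (\<Sum>a\<in>{a. 0 > a \<and> a > \<zeta> a}. \<bar>a\<bar>)"

locale lag_setting =
  fixes z u :: "int \<Rightarrow> int" and K :: int
  assumes z: "signed_perm z" and u: "signed_perm u" and crit: "bruhat0_crit u (z \<circ> u)"
    and Ku: "fixed_beyond K u" and Kz: "fixed_beyond K z"
begin

abbreviation "w \<equiv> z \<circ> u"

lemma w: "signed_perm w" by (rule signed_perm_comp[OF z u])

lemma Kw: "fixed_beyond K w" by (rule fixed_beyond_comp[OF Kz Ku])

lemma le_pos: "0 < p \<Longrightarrow> z (u p) \<le> u p"
  using bruhat0_crit_le[OF crit] by simp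

lemma ge_neg: "p < 0 \<Longrightarrow> u p \<le> z (u p)"
  using bruhat0_crit_ge_neg[OF u w crit] by simp

lemma pos_inv_of_drop: "z a < a \<Longrightarrow> 0 < inv u a"
  using bruhat0_crit_drop_pos[OF u w crit, of "inv u a"] by (simp add: signed_perm_f_inv_f[OF u])

lemma moved_in_window: "z a \<noteq> a \<Longrightarrow> \<bar>a\<bar> \<le> K"
  using Kz by (force simp: fixed_beyond_def)

lemma neg_sum_diff:
  "neg_sum K w - neg_sum K u =
     (\<Sum>a\<in>{a. a \<noteq> 0 \<and> a > z a \<and> 0 > z a}. \<bar>z a\<bar>) - (\<Sum>a\<in>{a. 0 > a \<and> a > z a}. \<bar>a\<bar>)"
proof -
  define W where "W = {-K..K} - {0}"
  define ng where "ng x = (if x < 0 then - x else (0::int))" for x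
  define g where "g v = (if z v < v then ng (z v) - ng v else 0)" for v
  have "neg_sum K f = (\<Sum>i\<in>{1..K}. ng (f i))" for f unfolding neg_sum_def ng_def ..
  then have "neg_sum K w - neg_sum K u = (\<Sum>p\<in>{1..K}. ng (w p) - ng (u p))"
    by (simp add: sum_subtractf)
  also have "\<dots> = (\<Sum>p\<in>{1..K}. g (u p))"
  proof (rule sum.cong)
    fix p assume "p \<in> {1..K}"
    then have "z (u p) \<le> u p" using le_pos by simp
    then show "ng (w p) - ng (u p) = g (u p)" by (cases "z (u p) = u p") (auto simp: g_def)
  qed simp
  also have "\<dots> = (\<Sum>p\<in>W. g (u p))"
  proof -
    have "W = {1..K} \<union> {-K..-1}" by (auto simp: W_def)
    moreover have "(\<Sum>p\<in>{-K..-1}. g (u p)) = 0"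
    proof (intro sum.neutral ballI)
      fix p assume "p \<in> {-K..-1}"
      then have "u p \<le> z (u p)" using ge_neg by simp
      then show "g (u p) = 0" by (simp add: g_def)
    qed
    ultimately show ?thesis by (simp add: sum.union_disjoint)
  qed
  also have "\<dots> = (\<Sum>v\<in>W. g v)"
    using sum.reindex[OF inj_on_subset[OF signed_perm_inj[OF u]], of W g]
    by (simp add: W_def signed_perm_image_punctured_window[OF u Ku])
  also have "\<dots> = (\<Sum>v\<in>{v \<in> W. z v < v \<and> z v < 0}. \<bar>z v\<bar>) - (\<Sum>v\<in>{v \<in> W. z v < v \<and> v < 0}. \<bar>v\<bar>)"
  proof -
    have "g v = (if z v < v \<and> z v < 0 then \<bar>z v\<bar> else 0) - (if z v < v \<and> v < 0 then \<bar>v\<bar> else 0)" for v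
      by (simp add: g_def ng_def)
    then have "(\<Sum>v\<in>W. g v) = (\<Sum>v\<in>W. if z v < v \<and> z v < 0 then \<bar>z v\<bar> else 0)
        - (\<Sum>v\<in>W. if z v < v \<and> v < 0 then \<bar>v\<bar> else 0)"
      by (simp add: sum_subtractf)
    moreover have "finite W" by (simp add: W_def)
    ultimately show ?thesis by (simp only: sum.inter_filter)
  qed
  also have "{v \<in> W. z v < v \<and> z v < 0} = {a. a \<noteq> 0 \<and> a > z a \<and> 0 > z a}"
    by (auto simp: W_def abs_le_iff dest: moved_in_window[OF less_imp_neq])
  also have "{v \<in> W. z v < v \<and> v < 0} = {a. 0 > a \<and> a > z a}"
    by (auto simp: W_def abs_le_iff dest: moved_in_window[OF less_imp_neq])
  finally show ?thesis .
qed


text \<open>\<open>bruhat0_crit\<close> forbids new inversions, so these account for the whole change of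
  \<open>inv_count\<close>.\<close>

definition lost_inversions :: "(int \<times> int) set" where
  "lost_inversions = {(p, q) \<in> {1..K} \<times> {1..K}. p < q \<and> u q < u p \<and> w p < w q}"

lemma finite_lost_inversions: "finite lost_inversions"
  unfolding lost_inversions_def by (rule finite_subset[of _ "{1..K} \<times> {1..K}"]) auto

lemma inv_count_diff: "inv_count K w - inv_count K u = - int (card lost_inversions)"
proof -
  define A where "A = {1..K}"
  have "inv_count K w - inv_count K u
      = (\<Sum>p\<in>A. \<Sum>q\<in>A. of_bool (p < q \<and> w q < w p) - (of_bool (p < q \<and> u q < u p) :: int))"
    unfolding inv_count_def A_def by (simp add: sum_subtractf del: sum_of_bool_eq)
  also have "\<dots> = (\<Sum>p\<in>A. \<Sum>q\<in>A. - of_bool (p < q \<and> u q < u p \<and> w p < w q))"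
  proof (intro sum.cong refl)
    fix p q assume pq: "p \<in> A" "q \<in> A"
    have "u p \<noteq> u q" "w p \<noteq> w q" if "p \<noteq> q"
      using signed_perm_eq_iff[OF u] signed_perm_eq_iff[OF w] that by auto
    moreover have "w p < w q" if "p < q" "u p < u q"
      using bruhat0_crit_less[OF crit, of p q] pq that by (simp add: A_def)
    ultimately show "of_bool (p < q \<and> w q < w p) - (of_bool (p < q \<and> u q < u p) :: int)
        = - of_bool (p < q \<and> u q < u p \<and> w p < w q)"
      by (cases "p < q"; cases "u p < u q") auto
  qed
  also have "\<dots> = - (\<Sum>x\<in>A \<times> A. of_bool (case x of (p, q) \<Rightarrow> p < q \<and> u q < u p \<and> w p < w q))"
    by (simp add: sum_negf sum.cartesian_product case_prod_beta del: sum_of_bool_eq)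
  also have "\<dots> = - int (card ((A \<times> A) \<inter> {x. case x of (p, q) \<Rightarrow> p < q \<and> u q < u p \<and> w p < w q}))"
    by (simp add: A_def)
  also have "(A \<times> A) \<inter> {x. case x of (p, q) \<Rightarrow> p < q \<and> u q < u p \<and> w p < w q} = lost_inversions"
    by (auto simp: A_def lost_inversions_def)
  finally show ?thesis .
qed

lemma card_lost_inversions_split:
  "card lost_inversions = card {(p, q) \<in> lost_inversions. w q < u q} + card {(p, q) \<in> lost_inversions. w q = u q}"
proof -
  have "w q \<le> u q" if "(p, q) \<in> lost_inversions" for p q
    using that le_pos[of q] by (simp add: lost_inversions_def)
  then have "lost_inversions = {(p, q) \<in> lost_inversions. w q < u q} \<union> {(p, q) \<in> lost_inversions. w q = u q}"
    by fastforce
  then have "card lost_inversions = card ({(p, q) \<in> lost_inversions. w q < u q} \<union> {(p, q) \<in> lost_inversions. w q = u q})"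
    by (rule arg_cong)
  also have "\<dots> = card {(p, q) \<in> lost_inversions. w q < u q} + card {(p, q) \<in> lost_inversions. w q = u q}"
    by (rule card_Un_disjoint) (auto intro: finite_subset[OF _ finite_lost_inversions])
  finally show ?thesis .
qed

lemma card_lost_moved:
  "card {(p, q) \<in> lost_inversions. w q < u q} =
     card {(a, b). a \<noteq> 0 \<and> b \<noteq> 0 \<and> a < b \<and> a > z a \<and> b > z b \<and> z a > z b}"
proof -
  define h where "h = (\<lambda>(p, q). (u q, u p))"
  have "inj_on h {(p, q) \<in> lost_inversions. w q < u q}"
    unfolding h_def inj_on_def using signed_perm_eq_iff[OF u] by auto
  moreover have "h ` {(p, q) \<in> lost_inversions. w q < u q} =
      {(a, b). a \<noteq> 0 \<and> b \<noteq> 0 \<and> a < b \<and> a > z a \<and> b > z b \<and> z a > z b}"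
  proof (intro set_eqI iffI)
    fix x assume "x \<in> h ` {(p, q) \<in> lost_inversions. w q < u q}"
    then obtain p q where pq: "(p, q) \<in> lost_inversions" "w q < u q" "x = (u q, u p)" by (auto simp: h_def)
    then have "0 < p" "0 < q" "u q < u p" "w p < w q" by (auto simp: lost_inversions_def)
    moreover have "w p \<le> u p" using le_pos[OF \<open>0 < p\<close>] by simp
    moreover have "u p \<noteq> 0" "u q \<noteq> 0" using signed_perm_eq_0_iff[OF u] \<open>0 < p\<close> \<open>0 < q\<close> by auto
    ultimately show "x \<in> {(a, b). a \<noteq> 0 \<and> b \<noteq> 0 \<and> a < b \<and> a > z a \<and> b > z b \<and> z a > z b}"
      using pq by auto
  next
    fix x assume "x \<in> {(a, b). a \<noteq> 0 \<and> b \<noteq> 0 \<and> a < b \<and> a > z a \<and> b > z b \<and> z a > z b}"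
    then obtain a b where ab: "x = (a, b)" "a < b" "z a < a" "z b < b" "z b < z a" by auto
    define p q where "p = inv u b" and "q = inv u a"
    have up: "u p = b" "u q = a" by (simp_all add: p_def q_def signed_perm_f_inv_f[OF u])
    have pos: "0 < p" "0 < q" using pos_inv_of_drop ab by (auto simp: p_def q_def)
    have "p \<le> K" "q \<le> K"
      using moved_le_bound[OF Ku Kw, of p] moved_le_bound[OF Ku Kw, of q] pos up ab by auto
    moreover have "p < q"
      using bruhat0_crit_less[OF crit pos(2), of p] up ab signed_perm_eq_iff[OF u, of p q]
      by (cases p q rule: linorder_cases) auto
    ultimately have "(p, q) \<in> {(p, q) \<in> lost_inversions. w q < u q}"
      using pos up ab by (auto simp: lost_inversions_def)
    moreover have "h (p, q) = x" using up ab by (simp add: h_def)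
    ultimately show "x \<in> h ` {(p, q) \<in> lost_inversions. w q < u q}" by force
  qed
  ultimately show ?thesis by (simp add: card_image[symmetric])
qed


definition down_crossings :: "int \<Rightarrow> nat" where
  "down_crossings f = card {x \<in> {-K..K}. z x < f \<and> f < x}"

lemma card_drops_across: "card {p \<in> {1..K}. w p < f \<and> f < u p} = down_crossings f"
proof -
  have "{p \<in> {1..K}. w p < f \<and> f < u p} = {p \<in> {-K..K}. z (u p) < f \<and> f < u p}"
  proof (intro set_eqI iffI)
    fix p assume p: "p \<in> {p \<in> {-K..K}. z (u p) < f \<and> f < u p}"
    then have "p \<noteq> 0" using signed_perm_zero[OF u] signed_perm_zero[OF z] by auto
    moreover have "\<not> p < 0" using ge_neg[of p] p by auto
    ultimately show "p \<in> {p \<in> {1..K}. w p < f \<and> f < u p}" using p by auto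
  qed auto
  then show ?thesis
    unfolding down_crossings_def using card_window_comp[OF u Ku, of "\<lambda>v. z v < f \<and> f < v"] by simp
qed

lemma down_crossings_abs: "z f = f \<Longrightarrow> down_crossings \<bar>f\<bar> = down_crossings f"
  unfolding down_crossings_def using card_cross_down_uminus[OF z Kz, of f] by (cases "0 \<le> f") auto

lemma card_lost_fixed_eq_sum:
  "card {(p, q) \<in> lost_inversions. w q = u q} = (\<Sum>q\<in>{q \<in> {1..K}. w q = u q}. down_crossings (u q))"
proof -
  define Fq where "Fq = {q \<in> {1..K}. w q = u q}"
  define Ps where "Ps q = {p \<in> {1..K}. w p < u q \<and> u q < u p}" for q
  have "{(p, q) \<in> lost_inversions. w q = u q} = (\<lambda>(q, p). (p, q)) ` Sigma Fq Ps"
  proof (intro set_eqI iffI)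
    fix x assume "x \<in> {(p, q) \<in> lost_inversions. w q = u q}"
    then obtain p q where "x = (p, q)" "q \<in> Fq" "p \<in> Ps q"
      by (auto simp: lost_inversions_def Fq_def Ps_def)
    then show "x \<in> (\<lambda>(q, p). (p, q)) ` Sigma Fq Ps" by force
  next
    fix x assume "x \<in> (\<lambda>(q, p). (p, q)) ` Sigma Fq Ps"
    then obtain p q where x: "x = (p, q)" and pq: "p \<in> {1..K}" "q \<in> {1..K}" "w q = u q" "w p < u q" "u q < u p"
      by (auto simp: Fq_def Ps_def)
    have "p < q"
      using bruhat0_crit_less[OF crit, of q p] pq by (cases p q rule: linorder_cases) auto
    then show "x \<in> {(p, q) \<in> lost_inversions. w q = u q}" using x pq by (auto simp: lost_inversions_def)
  qed
  moreover have "inj_on (\<lambda>(q, p). (p, q)) (Sigma Fq Ps)" by (auto simp: inj_on_def)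
  ultimately have "card {(p, q) \<in> lost_inversions. w q = u q} = card (Sigma Fq Ps)"
    by (simp add: card_image)
  also have "\<dots> = (\<Sum>q\<in>Fq. card (Ps q))"
    by (rule card_SigmaI) (auto simp: Fq_def Ps_def intro: finite_subset[of _ "{1..K}"])
  finally show ?thesis unfolding Fq_def Ps_def card_drops_across .
qed

lemma card_fixed_crossing_pairs:
  "card {(a, b). 0 < a \<and> a < b \<and> a = z a \<and> a > z b} = (\<Sum>a\<in>{a \<in> {1..K}. z a = a}. down_crossings a)"
proof -
  define Bs where "Bs a = {b \<in> {-K..K}. z b < a \<and> a < b}" for a
  have "{(a, b). 0 < a \<and> a < b \<and> a = z a \<and> a > z b} = Sigma {a \<in> {1..K}. z a = a} Bs"
  proof (intro set_eqI iffI)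
    fix x assume "x \<in> {(a, b). 0 < a \<and> a < b \<and> a = z a \<and> a > z b}"
    then obtain a b where x: "x = (a, b)" "0 < a" "a < b" "a = z a" "a > z b" by auto
    then have "\<bar>b\<bar> \<le> K" using moved_in_window[of b] by auto
    then show "x \<in> Sigma {a \<in> {1..K}. z a = a} Bs" using x by (auto simp: Bs_def)
  qed (auto simp: Bs_def)
  then have "card {(a, b). 0 < a \<and> a < b \<and> a = z a \<and> a > z b} = card (Sigma {a \<in> {1..K}. z a = a} Bs)"
    by simp
  also have "\<dots> = (\<Sum>a\<in>{a \<in> {1..K}. z a = a}. card (Bs a))"
    by (rule card_SigmaI) (auto simp: Bs_def intro: finite_subset[of _ "{1..K}"] finite_subset[of _ "{-K..K}"])
  finally show ?thesis by (simp add: Bs_def down_crossings_def)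
qed

lemma bij_betw_abs_fixed:
  "bij_betw (\<lambda>q. \<bar>u q\<bar>) {q \<in> {1..K}. w q = u q} {a \<in> {1..K}. z a = a}"
proof (rule bij_betwI')
  fix x y assume "x \<in> {q \<in> {1..K}. w q = u q}" "y \<in> {q \<in> {1..K}. w q = u q}"
  then show "(\<bar>u x\<bar> = \<bar>u y\<bar>) = (x = y)"
    using signed_perm_eq_iff[OF u, of x y] signed_perm_eq_iff[OF u, of x "- y"]
    by (auto simp: abs_eq_iff signed_perm_odd[OF u])
next
  fix x assume x: "x \<in> {q \<in> {1..K}. w q = u q}"
  then have "\<bar>u x\<bar> \<le> K" "u x \<noteq> 0" "z (u x) = u x"
    using fixed_beyond_window[OF u Ku, of x] signed_perm_eq_0_iff[OF u, of x] by auto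
  then show "\<bar>u x\<bar> \<in> {a \<in> {1..K}. z a = a}"
    by (cases "0 \<le> u x") (auto simp: signed_perm_odd[OF z])
next
  fix a assume a: "a \<in> {a \<in> {1..K}. z a = a}"
  define q where "q = \<bar>inv u a\<bar>"
  have ua: "u (inv u a) = a" by (rule signed_perm_f_inv_f[OF u])
  then have uq: "u q = a \<or> u q = - a" by (auto simp: q_def abs_if signed_perm_odd[OF u])
  have "\<bar>inv u a\<bar> \<le> K"
  proof (rule ccontr)
    assume "\<not> \<bar>inv u a\<bar> \<le> K"
    then have "inv u a = a" using Ku ua by (simp add: fixed_beyond_def)
    then show False using \<open>\<not> \<bar>inv u a\<bar> \<le> K\<close> a by simp
  qed
  moreover have "inv u a \<noteq> 0" using ua a signed_perm_zero[OF u] by auto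
  moreover have "z (u q) = u q" using uq a by (auto simp: signed_perm_odd[OF z])
  ultimately show "\<exists>q\<in>{q \<in> {1..K}. w q = u q}. a = \<bar>u q\<bar>"
    using uq a by (intro bexI[of _ q]) (auto simp: q_def)
qed

lemma sum_down_crossings_fixed:
  "(\<Sum>q\<in>{q \<in> {1..K}. w q = u q}. down_crossings (u q)) = (\<Sum>a\<in>{a \<in> {1..K}. z a = a}. down_crossings a)"
proof -
  have "(\<Sum>q\<in>{q \<in> {1..K}. w q = u q}. down_crossings \<bar>u q\<bar>) = (\<Sum>a\<in>{a \<in> {1..K}. z a = a}. down_crossings a)"
    by (rule sum.reindex_bij_betw[OF bij_betw_abs_fixed])
  then show ?thesis
    using down_crossings_abs by simp
qed


lemma blen_diff: "blen w - blen u = lag_formula z"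
proof -
  have "blen w - blen u = (inv_count K w - inv_count K u) + (neg_sum K w - neg_sum K u)"
    using blen_window[OF w Kw] blen_window[OF u Ku] by simp
  then show ?thesis
    unfolding lag_formula_def inv_count_diff neg_sum_diff card_lost_inversions_split card_lost_moved
      card_lost_fixed_eq_sum sum_down_crossings_fixed card_fixed_crossing_pairs[symmetric]
    by simp
qed

end

lemma blen_comp_diff:
  assumes z: "signed_perm \<zeta>" and u: "signed_perm u" and crit: "bruhat0_crit u (\<zeta> \<circ> u)"
  shows "blen (\<zeta> \<circ> u) - blen u = lag_formula \<zeta>"
proof -
  obtain K where Ku: "fixed_beyond K u" and Kz: "fixed_beyond K \<zeta>"
    using signed_perm_fixed_beyond[OF u, of 0] signed_perm_fixed_beyond[OF z] fixed_beyond_mono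
    by (metis linorder_le_cases)
  interpret lag_setting \<zeta> u K by unfold_locales (fact z u crit Ku Kz)+
  show ?thesis by (rule blen_diff)
qed

lemma lag_conditions_refl: "lag_conditions \<zeta> \<zeta>"
  by (simp add: lag_conditions_def)

theorem Lag_eq_lag_formula:
  assumes z: "signed_perm \<zeta>"
  shows "Lag \<zeta> = lag_formula \<zeta>"
proof -
  obtain u where u: "signed_perm u" "\<forall>p>0. u p \<in> descent_half \<zeta>"
    "\<forall>p q. 0 < p \<and> p < q \<longrightarrow> \<zeta> (u p) < \<zeta> (u q)"
    using exists_sorting_perm[OF z] by blast
  then have "bruhat0 u (\<zeta> \<circ> u)"
    using lag_conditions_imp_bruhat0_crit(1)[OF z z lag_conditions_refl] signed_perm_comp[OF z u(1)]
    by (simp add: bruhat0_iff_crit)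
  then have "\<exists>d v. signed_perm v \<and> bruhat0 v (\<zeta> \<circ> v) \<and> d = blen (\<zeta> \<circ> v) - blen v"
    using u(1) by blast
  \<comment> \<open>any witness of the \<open>SOME\<close> in \<open>Lag\<close> gives the same value, by \<open>blen_comp_diff\<close>\<close>
  from someI_ex[OF this] obtain v where "signed_perm v" "bruhat0 v (\<zeta> \<circ> v)"
    "Lag \<zeta> = blen (\<zeta> \<circ> v) - blen v"
    unfolding Lag_def by blast
  then show ?thesis using blen_comp_diff[OF z] by (simp add: bruhat0_iff_crit)
qed

theorem mainTheorem10:
  fixes \<eta> \<zeta> :: "int \<Rightarrow> int"
  assumes "signed_perm \<eta>" and "signed_perm \<zeta>"
  shows "(lag_le \<eta> \<zeta> \<longleftrightarrow>
           (\<forall>a. a \<noteq> 0 \<and> a > \<eta> a \<longrightarrow> \<eta> a \<ge> \<zeta> a) \<and>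
           (\<forall>a b. a \<noteq> 0 \<and> b \<noteq> 0 \<and> a < b \<and> a > \<zeta> a \<and> b > \<zeta> b \<and> \<zeta> a < \<zeta> b
                 \<longrightarrow> \<eta> a < \<eta> b))
       \<and> Lag \<zeta> =
           (\<Sum>a\<in>{a. a \<noteq> 0 \<and> a > \<zeta> a \<and> 0 > \<zeta> a}. \<bar>\<zeta> a\<bar>)
           - int (card {(a, b). 0 < a \<and> a < b \<and> a = \<zeta> a \<and> a > \<zeta> b})
           - int (card {(a, b). a \<noteq> 0 \<and> b \<noteq> 0 \<and> a < b \<and> a > \<zeta> a \<and> b > \<zeta> b \<and> \<zeta> a > \<zeta> b})
           - (\<Sum>a\<in>{a. 0 > a \<and> a > \<zeta> a}. \<bar>a\<bar>)"
  using lag_le_iff[OF assms] Lag_eq_lag_formula[OF assms(2)]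
  unfolding lag_conditions_def lag_formula_def by blast

end
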